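(* Let $\mathcal{R}$ be a left-linear TRS and $\mathcal{C}\subseteq\mathcal{R}$ a confluent TRS, and let $\mathcal{P}=\mathsf{PCPS}(\mathcal{R},\mathcal{C})$. If every parallel critical pair $(t,u)$ between $\mathcal{R}$ and $\mathcal{R}$ satisfies $t\to^*_\mathcal{R}\cdot{}_\mathcal{R}\!\!\leftarrow^*u$ and $\mathcal{P}/\mathcal{R}$ is terminating, then $\mathcal{R}$ is confluent.
   Context: A TRS is a set of rules $\ell\to r$ ($\ell\notin\mathcal{V}$, $\mathcal{V}ar(r)\subseteq\mathcal{V}ar(\ell)$); left-linear: no variable repeated in a left-hand side; confluent: ${}_\mathcal{R}\!\!\leftarrow^*\cdot\to_\mathcal{R}^*\subseteq\to_\mathcal{R}^*\cdot{}_\mathcal{R}\!\!\leftarrow^*$. $\mathcal{P}/\mathcal{R}$ is terminating if the relation $\to_\mathcal{R}^*\cdot\to_\mathcal{P}\cdot\to_\mathcal{R}^*$ admits no infinite chain. $\leftrightarrow^*_\mathcal{C}$ is the conversion relation of $\mathcal{C}$. Parallel critical peak between $\mathcal{R}$ and $\mathcal{R}$: for variants $\ell\to r$ and $\ell_p\to r_p$ ($p\in P$) of $\mathcal{R}$-rules, all pairwise variable-disjoint, where $P$ is a non-empty set of pairwise parallel (no one a prefix of another) function-symbol positions of $\ell$, $\sigma$ a most general unifier of $\{\ell_p\approx\ell|_p\}_{p\in P}$, and $\ell_\epsilon\to r_\epsilon$ not a variant of $\ell\to r$ if $P=\{\epsilon\}$ (root): the peak with source $s=\ell\sigma$, left result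 $t=(\ell\sigma)[r_p\sigma]_{p\in P}$ and right result $u=r\sigma$; $(t,u)$ is a parallel critical pair. $\mathsf{PCPS}(\mathcal{R},\mathcal{C})$ is the TRS consisting of the rules $s\to t$ and $s\to u$ for every such parallel critical peak $(t,s,u)$ for which $t\leftrightarrow^*_\mathcal{C}u$ does not hold. *)

theory Defs
  imports Main "HOL-Library.List_Lexorder"
begin

datatype (funs_trm: 'f, vars_trm: 'v) trm = Var 'v | Fun 'f "('f,'v) trm list"

type_synonym pos = "nat list"
type_synonym ('f,'v) rule = "('f,'v) trm \<times> ('f,'v) trm"

fun subst :: "('f,'v) trm \<Rightarrow> ('v \<Rightarrow> ('f,'w) trm) \<Rightarrow> ('f,'w) trm" where
  "subst (Var x) \<sigma> = \<sigma> x"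
| "subst (Fun f ts) \<sigma> = Fun f (map (\<lambda>t. subst t \<sigma>) ts)"

fun is_pos :: "('f,'v) trm \<Rightarrow> pos \<Rightarrow> bool" where
  "is_pos t [] = True"
| "is_pos (Var x) (i # p) = False"
| "is_pos (Fun f ts) (i # p) = (i < length ts \<and> is_pos (ts ! i) p)"

definition poss :: "('f,'v) trm \<Rightarrow> pos set" where
  "poss t = {p. is_pos t p}"

fun subt_at :: "('f,'v) trm \<Rightarrow> pos \<Rightarrow> ('f,'v) trm" where
  "subt_at t [] = t"
| "subt_at (Fun f ts) (i # p) = subt_at (ts ! i) p"
| "subt_at (Var x) (i # p) = Var x"

fun replace_at :: "('f,'v) trm \<Rightarrow> pos \<Rightarrow> ('f,'v) trm \<Rightarrow> ('f,'v) trm" where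
  "replace_at t [] s = s"
| "replace_at (Fun f ts) (i # p) s = Fun f (ts[i := replace_at (ts ! i) p s])"
| "replace_at (Var x) (i # p) s = Var x"

definition fun_poss :: "('f,'v) trm \<Rightarrow> pos set" where
  "fun_poss t = {p \<in> poss t. \<not> (\<exists>x. subt_at t p = Var x)}"

definition parallel_set :: "pos set \<Rightarrow> bool" where
  "parallel_set P = (\<forall>p\<in>P. \<forall>q\<in>P. p \<noteq> q \<longrightarrow> \<not> (\<exists>r. q = p @ r))"

text \<open>Simultaneous replacement at a finite set of pairwise parallel positions
  (the order of the individual replacements is irrelevant for parallel positions).\<close>
definition par_replace :: "('f,'v) trm \<Rightarrow> pos set \<Rightarrow> (pos \<Rightarrow> ('f,'v) trm) \<Rightarrow> ('f,'v) trm" where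
  "par_replace t P g = fold (\<lambda>p u. replace_at u p (g p)) (sorted_list_of_set P) t"

definition vars_rule :: "('f,'v) rule \<Rightarrow> 'v set" where
  "vars_rule \<rho> = vars_trm (fst \<rho>) \<union> vars_trm (snd \<rho>)"

definition trs :: "('f,'v) rule set \<Rightarrow> bool" where
  "trs R = (\<forall>(l, r) \<in> R. (\<nexists>x. l = Var x) \<and> vars_trm r \<subseteq> vars_trm l)"

fun linear_trm :: "('f,'v) trm \<Rightarrow> bool" where
  "linear_trm (Var x) = True"
| "linear_trm (Fun f ts) = ((\<forall>t \<in> set ts. linear_trm t) \<and>
     (\<forall>i < length ts. \<forall>j < length ts. i \<noteq> j \<longrightarrow> vars_trm (ts ! i) \<inter> vars_trm (ts ! j) = {}))"

definition left_linear :: "('f,'v) rule set \<Rightarrow> bool" where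
  "left_linear R = (\<forall>(l, r) \<in> R. linear_trm l)"

definition rstep :: "('f,'v) rule set \<Rightarrow> ('f,'v) trm rel" where
  "rstep R = {(s, t). \<exists>l r \<sigma> p. (l, r) \<in> R \<and> p \<in> poss s \<and> subt_at s p = subst l \<sigma>
                  \<and> t = replace_at s p (subst r \<sigma>)}"

definition CR :: "'a rel \<Rightarrow> bool" where
  "CR r = ((r\<inverse>)\<^sup>* O r\<^sup>* \<subseteq> r\<^sup>* O (r\<inverse>)\<^sup>*)"

definition joinable :: "'a rel \<Rightarrow> 'a rel" where
  "joinable r = r\<^sup>* O (r\<inverse>)\<^sup>*"

definition conv :: "'a rel \<Rightarrow> 'a rel" where
  "conv r = (r \<union> r\<inverse>)\<^sup>*"

definition SN_rel :: "'a rel \<Rightarrow> 'a rel \<Rightarrow> bool" where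
  "SN_rel P R = (\<nexists>f. \<forall>i. (f i, f (Suc i)) \<in> R\<^sup>* O P O R\<^sup>*)"

definition variant :: "('f,'v) rule \<Rightarrow> ('f,'v) rule \<Rightarrow> bool" where
  "variant \<rho>' \<rho> = (\<exists>\<pi>. bij \<pi> \<and> \<rho>' = (subst (fst \<rho>) (Var \<circ> \<pi>), subst (snd \<rho>) (Var \<circ> \<pi>)))"

definition variant_of :: "('f,'v) rule \<Rightarrow> ('f,'v) rule set \<Rightarrow> bool" where
  "variant_of \<rho>' R = (\<exists>\<rho>\<in>R. variant \<rho>' \<rho>)"

definition unifier :: "('v \<Rightarrow> ('f,'v) trm) \<Rightarrow> ('f,'v) rule set \<Rightarrow> bool" where
  "unifier \<sigma> E = (\<forall>(a, b) \<in> E. subst a \<sigma> = subst b \<sigma>)"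

definition mgu :: "('v \<Rightarrow> ('f,'v) trm) \<Rightarrow> ('f,'v) rule set \<Rightarrow> bool" where
  "mgu \<sigma> E = (unifier \<sigma> E \<and> (\<forall>\<tau>. unifier \<tau> E \<longrightarrow> (\<exists>\<delta>. \<forall>x. \<tau> x = subst (\<sigma> x) \<delta>)))"

definition pcpeaks :: "('f,'v) rule set \<Rightarrow> (('f,'v) trm \<times> ('f,'v) trm \<times> ('f,'v) trm) set" where
  "pcpeaks R = {(t, s, u). \<exists>l r (rl :: pos \<Rightarrow> ('f,'v) rule) P \<sigma>.
      variant_of (l, r) R \<and>
      P \<noteq> {} \<and> P \<subseteq> fun_poss l \<and> parallel_set P \<and>
      (\<forall>p\<in>P. variant_of (rl p) R) \<and>
      (\<forall>p\<in>P. vars_rule (l, r) \<inter> vars_rule (rl p) = {}) \<and>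
      (\<forall>p\<in>P. \<forall>q\<in>P. p \<noteq> q \<longrightarrow> vars_rule (rl p) \<inter> vars_rule (rl q) = {}) \<and>
      mgu \<sigma> {(fst (rl p), subt_at l p) | p. p \<in> P} \<and>
      (P = {[]} \<longrightarrow> \<not> variant (rl []) (l, r)) \<and>
      s = subst l \<sigma> \<and>
      t = par_replace (subst l \<sigma>) P (\<lambda>p. subst (snd (rl p)) \<sigma>) \<and>
      u = subst r \<sigma>}"

definition PCPS :: "('f,'v) rule set \<Rightarrow> ('f,'v) rule set \<Rightarrow> ('f,'v) rule set" where
  "PCPS R C = {(s, t) | s t u. (t, s, u) \<in> pcpeaks R \<and> (t, u) \<notin> conv (rstep C)}
            \<union> {(s, u) | s t u. (t, s, u) \<in> pcpeaks R \<and> (t, u) \<notin> conv (rstep C)}"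

end

theory Submission
  imports Defs
begin

text \<open>
  Relative termination of \<open>PCPS/R\<close> makes \<open>(\<rightarrow>\<^sup>*\<^sub>R \<cdot> \<rightarrow>\<^sub>P\<^sub>C\<^sub>P\<^sub>S \<cdot> \<rightarrow>\<^sup>*\<^sub>R)\<^sup>+\<close>
  well-founded, and one shows by induction along it that all peaks from a term \<open>s\<close> are
  \<open>R\<close>-joinable. Since this holds strictly below \<open>s\<close>, the \<open>C\<close>-steps together with the
  \<open>R\<close>-steps issued strictly below \<open>s\<close> form a confluent relation \<open>A\<close>. By left-linearity,
  a peak of two parallel \<open>R\<close>-steps either overlaps only inside the substitution, where it is
  closed by parallel steps, or is an instance of a parallel critical peak. That instance is closed
  by confluence of \<open>C\<close> when its critical pair is \<open>C\<close>-convertible; otherwise both of its steps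
  are \<open>PCPS\<close>-steps, so it is joinable strictly below \<open>s\<close>. Hence \<open>A\<^sup>* \<cdot> \<Rightarrow>\<^sub>R \<cdot> A\<^sup>*\<close> has
  the diamond property on the terms reachable from \<open>s\<close>.
\<close>

lemma subst_subst: "subst (subst t \<sigma>) \<tau> = subst t (\<lambda>x. subst (\<sigma> x) \<tau>)"
  by (induction t) auto

lemma subst_cong: "(\<And>x. x \<in> vars_trm t \<Longrightarrow> \<sigma> x = \<tau> x) \<Longrightarrow> subst t \<sigma> = subst t \<tau>"
  by (induction t) auto

lemma subst_Var [simp]: "subst t Var = t"
  by (induction t) (auto simp: map_idI)

lemma subst_eq_imp_eq_on_vars: "subst t \<sigma> = subst t \<tau> \<Longrightarrow> x \<in> vars_trm t \<Longrightarrow> \<sigma> x = \<tau> x"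
  by (induction t) (auto simp: map_eq_conv)

lemma vars_trm_rename: "vars_trm (subst t (Var \<circ> \<pi>)) = \<pi> ` vars_trm t"
  by (induction t) auto

lemma is_pos_subst: "is_pos t p \<Longrightarrow> is_pos (subst t \<sigma>) p"
  by (induction t p rule: is_pos.induct) auto

lemma subt_at_subst: "is_pos t p \<Longrightarrow> subt_at (subst t \<sigma>) p = subst (subt_at t p) \<sigma>"
  by (induction t p rule: is_pos.induct) auto

lemma vars_subt_at: "is_pos l p \<Longrightarrow> vars_trm (subt_at l p) \<subseteq> vars_trm l"
  by (induction l p rule: is_pos.induct) (auto dest!: nth_mem)

lemma fun_poss_is_pos: "q \<in> fun_poss l \<Longrightarrow> is_pos l q"
  by (auto simp: fun_poss_def poss_def)

lemma Cons_fun_poss_Fun: "i < length ls \<Longrightarrow> q \<in> fun_poss (ls ! i) \<Longrightarrow> i # q \<in> fun_poss (Fun f ls)"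
  by (auto simp: fun_poss_def poss_def)

lemma root_fun_poss_Fun: "[] \<in> fun_poss (Fun f ls)"
  by (auto simp: fun_poss_def poss_def)

lemma fun_poss_Var [simp]: "fun_poss (Var x) = {}"
  by (auto simp: fun_poss_def poss_def elim: is_pos.elims)

lemma trs_lhs_is_Fun: "trs R \<Longrightarrow> (l, r) \<in> R \<Longrightarrow> \<exists>f ls. l = Fun f ls"
  unfolding trs_def by (cases l) auto

inductive_set rew :: "('f,'v) rule set \<Rightarrow> ('f,'v) trm rel" for R where
  rew_root: "(l, r) \<in> R \<Longrightarrow> (subst l \<sigma>, subst r \<sigma>) \<in> rew R"
| rew_ctxt: "(s, t) \<in> rew R \<Longrightarrow> i < length ts \<Longrightarrow> (Fun f (ts[i := s]), Fun f (ts[i := t])) \<in> rew R"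

lemma rew_replace_at:
  assumes "(l, r) \<in> R" and "is_pos s p" and "subt_at s p = subst l \<sigma>"
  shows "(s, replace_at s p (subst r \<sigma>)) \<in> rew R"
  using assms(2,3)
proof (induction s p rule: is_pos.induct)
  case (1 t)
  then show ?case using rew_root[OF assms(1)] by simp
next
  case (3 f ts i p)
  then show ?case using rew_ctxt[of "ts ! i" _ R i ts f] by simp
qed simp

lemma rew_imp_replace_at:
  "(s, t) \<in> rew R \<Longrightarrow> \<exists>l r \<sigma> p. (l, r) \<in> R \<and> is_pos s p \<and> subt_at s p = subst l \<sigma> \<and>
     t = replace_at s p (subst r \<sigma>)"
proof (induction rule: rew.induct)
  case (rew_root l r \<sigma>)
  then show ?case by (intro exI[of _ l] exI[of _ r] exI[of _ \<sigma>] exI[of _ "[]"]) simp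
next
  case (rew_ctxt s t i ts f)
  then obtain l r \<sigma> p where "(l, r) \<in> R" "is_pos s p" "subt_at s p = subst l \<sigma>"
    "t = replace_at s p (subst r \<sigma>)" by blast
  with rew_ctxt.hyps(2) show ?case by (intro exI[of _ l] exI[of _ r] exI[of _ \<sigma>] exI[of _ "i # p"]) simp
qed

lemma rstep_eq_rew: "rstep R = rew R"
proof
  show "rstep R \<subseteq> rew R"
    unfolding rstep_def poss_def by (auto intro: rew_replace_at)
  show "rew R \<subseteq> rstep R"
    unfolding rstep_def poss_def by (auto dest!: rew_imp_replace_at)
qed

lemma rew_subst: "(s, t) \<in> rew R \<Longrightarrow> (subst s \<tau>, subst t \<tau>) \<in> rew R"
proof (induction rule: rew.induct)
  case (rew_root l r \<sigma>)
  then show ?case using rew.rew_root[OF rew_root, of "\<lambda>x. subst (\<sigma> x) \<tau>"] by (simp add: subst_subst)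
next
  case (rew_ctxt s t i ts f)
  then show ?case using rew.rew_ctxt[OF rew_ctxt.IH, of i "map (\<lambda>t. subst t \<tau>) ts" f]
    by (simp add: map_update)
qed

lemma rew_mono: "R \<subseteq> R' \<Longrightarrow> rew R \<subseteq> rew R'"
proof (intro subrelI)
  fix s t assume "(s, t) \<in> rew R" and "R \<subseteq> R'"
  then show "(s, t) \<in> rew R'" by (induction rule: rew.induct) (auto intro: rew.intros)
qed

lemma rew_rtrancl_ctxt:
  "(s, t) \<in> (rew R)\<^sup>* \<Longrightarrow> i < length ts \<Longrightarrow> (Fun f (ts[i := s]), Fun f (ts[i := t])) \<in> (rew R)\<^sup>*"
  by (induction rule: rtrancl_induct) (auto intro: rtrancl_into_rtrancl rew_ctxt)

lemma rew_rtrancl_args: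
  assumes "list_all2 (\<lambda>a b. (a, b) \<in> (rew R)\<^sup>*) as bs"
  shows "(Fun f as, Fun f bs) \<in> (rew R)\<^sup>*"
proof -
  have "(Fun f (ps @ as), Fun f (ps @ bs)) \<in> (rew R)\<^sup>*" for ps
    using assms
  proof (induction as bs arbitrary: ps rule: list_all2_induct)
    case (Cons a as b bs)
    have "(Fun f (ps @ a # as), Fun f (ps @ b # as)) \<in> (rew R)\<^sup>*"
      using rew_rtrancl_ctxt[OF Cons(1), of "length ps" "ps @ a # as" f] by simp
    with Cons(3)[of "ps @ [b]"] show ?case by (simp add: rtrancl_trans)
  qed simp
  from this[of "[]"] show ?thesis by simp
qed

lemma rew_rtrancl_subst: "(s, t) \<in> (rew R)\<^sup>* \<Longrightarrow> (subst s \<tau>, subst t \<tau>) \<in> (rew R)\<^sup>*"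
  by (induction rule: rtrancl_induct) (auto intro: rtrancl_into_rtrancl rew_subst)

lemma conv_rew_subst: "(s, t) \<in> conv (rew R) \<Longrightarrow> (subst s \<tau>, subst t \<tau>) \<in> conv (rew R)"
  unfolding conv_def
  by (induction rule: rtrancl_induct) (auto intro: rtrancl_into_rtrancl rew_subst)

lemma joinable_iff: "(a, b) \<in> joinable r \<longleftrightarrow> (\<exists>v. (a, v) \<in> r\<^sup>* \<and> (b, v) \<in> r\<^sup>*)"
  unfolding joinable_def rtrancl_converse by auto

lemma joinable_sym: "(a, b) \<in> joinable r \<Longrightarrow> (b, a) \<in> joinable r"
  unfolding joinable_iff by blast

lemma joinable_rew_ctxt:
  "(s, t) \<in> joinable (rew R) \<Longrightarrow> i < length ts \<Longrightarrow> (Fun f (ts[i := s]), Fun f (ts[i := t])) \<in> joinable (rew R)"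
  unfolding joinable_iff by (blast intro: rew_rtrancl_ctxt)

lemma joinable_rew_subst: "(s, t) \<in> joinable (rew R) \<Longrightarrow> (subst s \<tau>, subst t \<tau>) \<in> joinable (rew R)"
  unfolding joinable_iff by (blast intro: rew_rtrancl_subst)

lemma CR_join: "CR r \<Longrightarrow> (b, m) \<in> r\<^sup>* \<Longrightarrow> (b, c) \<in> r\<^sup>* \<Longrightarrow> \<exists>w. (m, w) \<in> r\<^sup>* \<and> (c, w) \<in> r\<^sup>*"
  unfolding CR_def rtrancl_converse by blast

lemma CR_iff_join: "CR r \<longleftrightarrow> (\<forall>b m c. (b, m) \<in> r\<^sup>* \<longrightarrow> (b, c) \<in> r\<^sup>* \<longrightarrow> (m, c) \<in> joinable r)"
  unfolding CR_def joinable_def rtrancl_converse by blast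

lemma CR_conv_imp_joinable:
  assumes "CR r" and "(a, b) \<in> conv r"
  shows "(a, b) \<in> joinable r"
  using assms(2) unfolding conv_def
proof (induction rule: rtrancl_induct)
  case base
  then show ?case unfolding joinable_iff by blast
next
  case (step b c)
  then obtain m where am: "(a, m) \<in> r\<^sup>*" and bm: "(b, m) \<in> r\<^sup>*" unfolding joinable_iff by blast
  show ?case
  proof (cases "(b, c) \<in> r")
    case True
    then obtain w where "(m, w) \<in> r\<^sup>*" "(c, w) \<in> r\<^sup>*" using CR_join[OF assms(1) bm] by blast
    with am show ?thesis unfolding joinable_iff by (blast intro: rtrancl_trans)
  next
    case False
    with step(2) have "(c, m) \<in> r\<^sup>*" using bm by (auto intro: converse_rtrancl_into_rtrancl)
    with am show ?thesis unfolding joinable_iff by blast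
  qed
qed

inductive par :: "('f,'v) rule set \<Rightarrow> ('f,'v) trm \<Rightarrow> ('f,'v) trm \<Rightarrow> bool" for R where
  par_Var: "par R (Var x) (Var x)"
| par_Fun: "list_all2 (par R) ss ts \<Longrightarrow> par R (Fun f ss) (Fun f ts)"
| par_root: "(l, r) \<in> R \<Longrightarrow> par R (subst l \<sigma>) (subst r \<sigma>)"

lemma par_refl [simp]: "par R t t"
  by (induction t) (auto intro: par_Var par_Fun simp: list_all2_conv_all_nth)

lemma rew_imp_par: "(s, t) \<in> rew R \<Longrightarrow> par R s t"
proof (induction rule: rew.induct)
  case (rew_root l r \<sigma>)
  then show ?case by (rule par_root)
next
  case (rew_ctxt s t i ts f)
  then show ?case by (auto intro!: par_Fun simp: list_all2_conv_all_nth nth_list_update)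
qed

lemma par_imp_rew_rtrancl: "par R s t \<Longrightarrow> (s, t) \<in> (rew R)\<^sup>*"
proof (induction rule: par.induct)
  case (par_Fun ss ts f)
  then show ?case by (intro rew_rtrancl_args) (auto elim: list_all2_mono)
next
  case (par_root l r \<sigma>)
  then show ?case by (blast intro: rew_root)
qed simp

lemma par_subst: "(\<And>x. par R (\<sigma> x) (\<sigma>' x)) \<Longrightarrow> par R (subst t \<sigma>) (subst t \<sigma>')"
  by (induction t) (auto intro!: par_Fun simp: list_all2_conv_all_nth)

lemma par_Var_imp_eq: "par R (Var x) t \<Longrightarrow> trs R \<Longrightarrow> t = Var x"
  by (cases rule: par.cases) (auto dest: trs_lhs_is_Fun)

section \<open>An abstract confluence criterion\<close>

definition decreasing_peak :: "'a rel \<Rightarrow> 'a rel \<Rightarrow> 'a \<Rightarrow> 'a \<Rightarrow> 'a \<Rightarrow> bool" where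
  "decreasing_peak r p x t u \<longleftrightarrow> (\<exists>x1 x2. (x, x1) \<in> p \<and> (x, x2) \<in> p \<and>
     (x1, t) \<in> r\<^sup>* \<and> (x2, u) \<in> r\<^sup>* \<and> (x1, x2) \<in> joinable r)"

lemma decreasing_peak_sym: "decreasing_peak r p x t u \<Longrightarrow> decreasing_peak r p x u t"
  unfolding decreasing_peak_def joinable_iff by blast

text \<open>
  \<open>S\<close> abstracts parallel rewriting, \<open>c\<close> the confluent subsystem and \<open>p\<close> the critical-peak
  steps that terminate relative to \<open>r\<close>.
\<close>
locale relative_termination_criterion =
  fixes r S c p :: "'a rel"
  assumes r_subset_S: "r \<subseteq> S" and S_subset_rtrancl: "S \<subseteq> r\<^sup>*" and S_refl: "(x, x) \<in> S"
    and c_subset_r: "c \<subseteq> r" and CR_c: "CR c"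
    and SN_rel_p_r: "SN_rel p r"
    and c_S_peak: "\<And>x t u. (x, t) \<in> c \<Longrightarrow> (x, u) \<in> S \<Longrightarrow>
      (\<exists>v. (t, v) \<in> S O c\<^sup>* \<and> (u, v) \<in> c\<^sup>*) \<or> decreasing_peak r p x t u"
    and S_S_peak: "\<And>x t u. (x, t) \<in> S \<Longrightarrow> (x, u) \<in> S \<Longrightarrow>
      (\<exists>v. (t, v) \<in> S O c\<^sup>* \<and> (u, v) \<in> S O c\<^sup>*) \<or> decreasing_peak r p x t u"
begin

definition below :: "'a rel" where
  "below = (r\<^sup>* O p O r\<^sup>*)\<^sup>+"

lemma wf_converse_below: "wf (below\<inverse>)"
proof -
  have "wf ((r\<^sup>* O p O r\<^sup>*)\<inverse>)"
    using SN_rel_p_r unfolding SN_rel_def wf_iff_no_infinite_down_chain by auto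
  then show ?thesis unfolding below_def by (simp add: wf_trancl flip: trancl_converse)
qed

lemma below_rtrancl_trans: "(a, b) \<in> below \<Longrightarrow> (b, e) \<in> r\<^sup>* \<Longrightarrow> (a, e) \<in> below"
  unfolding below_def
proof (induction rule: trancl_induct)
  case (base y)
  then show ?case by (blast intro: rtrancl_trans)
next
  case (step y z)
  then have "(y, e) \<in> r\<^sup>* O p O r\<^sup>*" by (blast intro: rtrancl_trans)
  with step(1) show ?case by (rule trancl_into_trancl)
qed

definition peaks_joinable :: "'a \<Rightarrow> bool" where
  "peaks_joinable y \<longleftrightarrow> (\<forall>t u. (y, t) \<in> r\<^sup>* \<longrightarrow> (y, u) \<in> r\<^sup>* \<longrightarrow> (t, u) \<in> joinable r)"

context
  fixes s
  assumes IH: "\<And>y. (s, y) \<in> below \<Longrightarrow> peaks_joinable y"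
begin

definition low :: "'a \<Rightarrow> bool" where
  "low y \<longleftrightarrow> (s, y) \<in> below"

definition reach :: "'a \<Rightarrow> bool" where
  "reach y \<longleftrightarrow> (s, y) \<in> r\<^sup>*"

definition A :: "'a rel" where
  "A = c \<union> {(y, z). (y, z) \<in> r \<and> low y}"

lemma low_rtrancl: "low y \<Longrightarrow> (y, z) \<in> r\<^sup>* \<Longrightarrow> low z"
  unfolding low_def using below_rtrancl_trans by blast

lemma reach_rtrancl: "reach y \<Longrightarrow> (y, z) \<in> r\<^sup>* \<Longrightarrow> reach z"
  unfolding reach_def by (rule rtrancl_trans)

lemma reach_p_imp_low: "reach x \<Longrightarrow> (x, x1) \<in> p \<Longrightarrow> low x1"
  unfolding reach_def low_def below_def by blast

lemma A_rtrancl_imp_r: "(a, b) \<in> A\<^sup>* \<Longrightarrow> (a, b) \<in> r\<^sup>*"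
  using rtrancl_mono[of A r] c_subset_r unfolding A_def by blast

lemma c_rtrancl_imp_A: "(a, b) \<in> c\<^sup>* \<Longrightarrow> (a, b) \<in> A\<^sup>*"
  using rtrancl_mono[of c A] unfolding A_def by blast

lemma c_rtrancl_imp_r: "(a, b) \<in> c\<^sup>* \<Longrightarrow> (a, b) \<in> r\<^sup>*"
  using rtrancl_mono[OF c_subset_r] by blast

lemma low_r_rtrancl_imp_A: "(y, z) \<in> r\<^sup>* \<Longrightarrow> low y \<Longrightarrow> (y, z) \<in> A\<^sup>*"
proof (induction rule: rtrancl_induct)
  case (step z z')
  then have "(z, z') \<in> A" unfolding A_def using low_rtrancl by blast
  with step show ?case by (meson rtrancl_into_rtrancl)
qed simp

lemma low_join_A: "low y \<Longrightarrow> (y, a) \<in> r\<^sup>* \<Longrightarrow> (y, b) \<in> r\<^sup>* \<Longrightarrow> \<exists>v. (a, v) \<in> A\<^sup>* \<and> (b, v) \<in> A\<^sup>*"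
proof -
  assume y: "low y" and ya: "(y, a) \<in> r\<^sup>*" and yb: "(y, b) \<in> r\<^sup>*"
  then have "(a, b) \<in> joinable r" using IH unfolding low_def peaks_joinable_def by blast
  then obtain v where "(a, v) \<in> r\<^sup>*" "(b, v) \<in> r\<^sup>*" unfolding joinable_iff by blast
  then show ?thesis using low_r_rtrancl_imp_A low_rtrancl[OF y ya] low_rtrancl[OF y yb] by blast
qed

lemma A_rtrancl_cases: "(y, t) \<in> A\<^sup>* \<Longrightarrow> (y, t) \<in> c\<^sup>* \<or> (\<exists>a. (y, a) \<in> c\<^sup>* \<and> low a \<and> (a, t) \<in> r\<^sup>*)"
proof (induction rule: rtrancl_induct)
  case (step t t')
  have "(t, t') \<in> r" using step(2) c_subset_r unfolding A_def by blast
  with step show ?case unfolding A_def by (blast intro: rtrancl_into_rtrancl)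
qed simp

lemma low_c_peak_join_A:
  assumes "(y, a) \<in> c\<^sup>*" and "low a" and "(a, t) \<in> r\<^sup>*" and "(y, u) \<in> c\<^sup>*"
  shows "\<exists>v. (t, v) \<in> A\<^sup>* \<and> (u, v) \<in> A\<^sup>*"
proof -
  obtain w where aw: "(a, w) \<in> c\<^sup>*" and uw: "(u, w) \<in> c\<^sup>*" using CR_join[OF CR_c assms(1,4)] by blast
  obtain v where "(t, v) \<in> A\<^sup>*" and "(w, v) \<in> A\<^sup>*"
    using low_join_A[OF assms(2,3) c_rtrancl_imp_r[OF aw]] by blast
  with uw show ?thesis by (blast intro: rtrancl_trans c_rtrancl_imp_A)
qed

lemma A_join: "(y, t) \<in> A\<^sup>* \<Longrightarrow> (y, u) \<in> A\<^sup>* \<Longrightarrow> \<exists>v. (t, v) \<in> A\<^sup>* \<and> (u, v) \<in> A\<^sup>*"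
proof (elim A_rtrancl_cases[elim_format] disjE exE conjE)
  assume "(y, t) \<in> c\<^sup>*" "(y, u) \<in> c\<^sup>*"
  then show ?thesis using CR_join[OF CR_c] c_rtrancl_imp_A by blast
next
  fix b assume "(y, t) \<in> c\<^sup>*" "(y, b) \<in> c\<^sup>*" "low b" "(b, u) \<in> r\<^sup>*"
  then show ?thesis using low_c_peak_join_A by blast
next
  fix a assume "(y, a) \<in> c\<^sup>*" "low a" "(a, t) \<in> r\<^sup>*" "(y, u) \<in> c\<^sup>*"
  then show ?thesis using low_c_peak_join_A by blast
next
  fix a b assume ya: "(y, a) \<in> c\<^sup>*" and a: "low a" "(a, t) \<in> r\<^sup>*"
    and yb: "(y, b) \<in> c\<^sup>*" and b: "low b" "(b, u) \<in> r\<^sup>*"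
  obtain w where aw: "(a, w) \<in> c\<^sup>*" and bw: "(b, w) \<in> c\<^sup>*" using CR_join[OF CR_c ya yb] by blast
  obtain v1 where tv1: "(t, v1) \<in> A\<^sup>*" and wv1: "(w, v1) \<in> A\<^sup>*"
    using low_join_A[OF a c_rtrancl_imp_r[OF aw]] by blast
  obtain v2 where uv2: "(u, v2) \<in> A\<^sup>*" and wv2: "(w, v2) \<in> A\<^sup>*"
    using low_join_A[OF b c_rtrancl_imp_r[OF bw]] by blast
  have "low w" using low_rtrancl[OF a(1) c_rtrancl_imp_r[OF aw]] .
  then obtain v where "(v1, v) \<in> A\<^sup>*" "(v2, v) \<in> A\<^sup>*"
    using low_join_A A_rtrancl_imp_r[OF wv1] A_rtrancl_imp_r[OF wv2] by blast
  with tv1 uv2 show ?thesis by (meson rtrancl_trans)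
qed

lemma decreasing_peak_join_A:
  assumes "reach x" and "decreasing_peak r p x t u"
  shows "\<exists>v. (t, v) \<in> A\<^sup>* \<and> (u, v) \<in> A\<^sup>*"
proof -
  obtain x1 x2 where p1: "(x, x1) \<in> p" and p2: "(x, x2) \<in> p" and x1t: "(x1, t) \<in> r\<^sup>*"
    and x2u: "(x2, u) \<in> r\<^sup>*" and "(x1, x2) \<in> joinable r"
    using assms(2) unfolding decreasing_peak_def by blast
  then obtain m where x1m: "(x1, m) \<in> r\<^sup>*" and x2m: "(x2, m) \<in> r\<^sup>*" unfolding joinable_iff by blast
  have l1: "low x1" and l2: "low x2" using reach_p_imp_low[OF assms(1)] p1 p2 by blast+
  obtain a where ta: "(t, a) \<in> A\<^sup>*" and ma: "(m, a) \<in> A\<^sup>*" using low_join_A[OF l1 x1t x1m] by blast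
  obtain b where ub: "(u, b) \<in> A\<^sup>*" and mb: "(m, b) \<in> A\<^sup>*" using low_join_A[OF l2 x2u x2m] by blast
  obtain v where "(a, v) \<in> A\<^sup>*" "(b, v) \<in> A\<^sup>*"
    using low_join_A[OF low_rtrancl[OF l1 x1m] A_rtrancl_imp_r[OF ma] A_rtrancl_imp_r[OF mb]] by blast
  with ta ub show ?thesis by (meson rtrancl_trans)
qed

lemma A_S_peak:
  assumes "reach y" and "(y, z) \<in> A" and "(y, w) \<in> S"
  shows "\<exists>v. (z, v) \<in> S O A\<^sup>* \<and> (w, v) \<in> A\<^sup>*"
proof (cases "low y")
  case True
  have "(y, z) \<in> r\<^sup>*" "(y, w) \<in> r\<^sup>*" using assms(2,3) A_rtrancl_imp_r S_subset_rtrancl by blast+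
  then show ?thesis using low_join_A[OF True] S_refl by blast
next
  case False
  then have "(y, z) \<in> c" using assms(2) unfolding A_def by blast
  from c_S_peak[OF this assms(3)] show ?thesis
    using decreasing_peak_join_A[OF assms(1)] S_refl c_rtrancl_imp_A by blast
qed

lemma A_rtrancl_S_peak:
  "(y, z) \<in> A\<^sup>* \<Longrightarrow> reach y \<Longrightarrow> (y, w) \<in> S \<Longrightarrow> \<exists>v. (z, v) \<in> S O A\<^sup>* \<and> (w, v) \<in> A\<^sup>*"
proof (induction rule: rtrancl_induct)
  case base
  then show ?case by blast
next
  case (step z z')
  then obtain v d where zd: "(z, d) \<in> S" and dv: "(d, v) \<in> A\<^sup>*" and wv: "(w, v) \<in> A\<^sup>*" by blast
  have "reach z" using reach_rtrancl[OF step(4) A_rtrancl_imp_r[OF step(1)]] .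
  then obtain e d' where z'd': "(z', d') \<in> S" and d'e: "(d', e) \<in> A\<^sup>*" and de: "(d, e) \<in> A\<^sup>*"
    using A_S_peak step(2) zd by blast
  obtain v' where "(e, v') \<in> A\<^sup>*" "(v, v') \<in> A\<^sup>*" using A_join[OF de dv] by blast
  with z'd' d'e wv show ?case by (blast intro: rtrancl_trans)
qed

lemma S_S_join:
  assumes "reach y" and "(y, z) \<in> S" and "(y, w) \<in> S"
  shows "\<exists>v. (z, v) \<in> S O A\<^sup>* \<and> (w, v) \<in> S O A\<^sup>*"
proof (cases "low y")
  case True
  have "(y, z) \<in> r\<^sup>*" "(y, w) \<in> r\<^sup>*" using assms(2,3) S_subset_rtrancl by blast+
  then show ?thesis using low_join_A[OF True] S_refl by blast
next
  case False
  from S_S_peak[OF assms(2,3)] show ?thesis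
    using decreasing_peak_join_A[OF assms(1)] S_refl c_rtrancl_imp_A by blast
qed

definition X :: "'a rel" where
  "X = A\<^sup>* O S O A\<^sup>*"

lemma X_rtrancl_imp_r: "(a, b) \<in> X\<^sup>* \<Longrightarrow> (a, b) \<in> r\<^sup>*"
proof -
  have "X \<subseteq> r\<^sup>*"
    unfolding X_def using A_rtrancl_imp_r S_subset_rtrancl by (blast intro: rtrancl_trans)
  then show "(a, b) \<in> X\<^sup>* \<Longrightarrow> (a, b) \<in> r\<^sup>*" using rtrancl_subset_rtrancl by blast
qed

lemma r_subset_X: "r \<subseteq> X"
  unfolding X_def using r_subset_S by (meson relcompI rtrancl_refl subrelI subsetD)

lemma X_A_rtrancl_trans: "(a, b) \<in> X \<Longrightarrow> (b, e) \<in> A\<^sup>* \<Longrightarrow> (a, e) \<in> X"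
  unfolding X_def by (blast intro: rtrancl_trans)

lemma X_diamond_half:
  assumes "(z1, t) \<in> A\<^sup>*" and "(z1, n1) \<in> A\<^sup>*"
    and "reach m1" and "(m1, n1) \<in> A\<^sup>*" and "(m1, p1) \<in> S" and "(p1, q) \<in> A\<^sup>*"
  shows "\<exists>d. (t, d) \<in> X \<and> (q, d) \<in> A\<^sup>*"
proof -
  obtain k1 where tk1: "(t, k1) \<in> A\<^sup>*" and n1k1: "(n1, k1) \<in> A\<^sup>*" using A_join[OF assms(1,2)] by blast
  have "reach n1" using reach_rtrancl[OF assms(3) A_rtrancl_imp_r[OF assms(4)]] .
  obtain e1 h1 where n1h1: "(n1, h1) \<in> S" and h1e1: "(h1, e1) \<in> A\<^sup>*" and p1e1: "(p1, e1) \<in> A\<^sup>*"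
    using A_rtrancl_S_peak[OF assms(4,3,5)] by blast
  obtain f1 g1 where k1g1: "(k1, g1) \<in> S" and g1f1: "(g1, f1) \<in> A\<^sup>*" and h1f1: "(h1, f1) \<in> A\<^sup>*"
    using A_rtrancl_S_peak[OF n1k1 \<open>reach n1\<close> n1h1] by blast
  obtain c1 where e1c1: "(e1, c1) \<in> A\<^sup>*" and qc1: "(q, c1) \<in> A\<^sup>*" using A_join[OF p1e1 assms(6)] by blast
  obtain d1 where f1d1: "(f1, d1) \<in> A\<^sup>*" and c1d1: "(c1, d1) \<in> A\<^sup>*"
    using A_join[OF h1f1 rtrancl_trans[OF h1e1 e1c1]] by blast
  have "(t, d1) \<in> X" using tk1 k1g1 rtrancl_trans[OF g1f1 f1d1] unfolding X_def by blast
  with qc1 c1d1 show ?thesis by (blast intro: rtrancl_trans)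
qed

lemma X_diamond:
  assumes "reach x" and "(x, t) \<in> X" and "(x, u) \<in> X"
  shows "\<exists>v. (t, v) \<in> X \<and> (u, v) \<in> X"
proof -
  obtain y1 z1 where xy1: "(x, y1) \<in> A\<^sup>*" and y1z1: "(y1, z1) \<in> S" and z1t: "(z1, t) \<in> A\<^sup>*"
    using assms(2) unfolding X_def by blast
  obtain y2 z2 where xy2: "(x, y2) \<in> A\<^sup>*" and y2z2: "(y2, z2) \<in> S" and z2u: "(z2, u) \<in> A\<^sup>*"
    using assms(3) unfolding X_def by blast
  obtain m where y1m: "(y1, m) \<in> A\<^sup>*" and y2m: "(y2, m) \<in> A\<^sup>*" using A_join[OF xy1 xy2] by blast
  have y1: "reach y1" and y2: "reach y2"
    using reach_rtrancl[OF assms(1)] A_rtrancl_imp_r xy1 xy2 by blast+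
  then have m: "reach m" using reach_rtrancl A_rtrancl_imp_r y1m by blast
  obtain m1 n1 where mm1: "(m, m1) \<in> S" and m1n1: "(m1, n1) \<in> A\<^sup>*" and z1n1: "(z1, n1) \<in> A\<^sup>*"
    using A_rtrancl_S_peak[OF y1m y1 y1z1] by blast
  obtain m2 n2 where mm2: "(m, m2) \<in> S" and m2n2: "(m2, n2) \<in> A\<^sup>*" and z2n2: "(z2, n2) \<in> A\<^sup>*"
    using A_rtrancl_S_peak[OF y2m y2 y2z2] by blast
  obtain q p1 p2 where m1p1: "(m1, p1) \<in> S" and p1q: "(p1, q) \<in> A\<^sup>*"
    and m2p2: "(m2, p2) \<in> S" and p2q: "(p2, q) \<in> A\<^sup>*"
    using S_S_join[OF m mm1 mm2] by blast
  have m1: "reach m1" and m2: "reach m2" using reach_rtrancl[OF m] S_subset_rtrancl mm1 mm2 by blast+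
  obtain d1 where td1: "(t, d1) \<in> X" and qd1: "(q, d1) \<in> A\<^sup>*"
    using X_diamond_half[OF z1t z1n1 m1 m1n1 m1p1 p1q] by blast
  obtain d2 where ud2: "(u, d2) \<in> X" and qd2: "(q, d2) \<in> A\<^sup>*"
    using X_diamond_half[OF z2u z2n2 m2 m2n2 m2p2 p2q] by blast
  obtain d where "(d1, d) \<in> A\<^sup>*" "(d2, d) \<in> A\<^sup>*" using A_join[OF qd1 qd2] by blast
  then show ?thesis using X_A_rtrancl_trans td1 ud2 by blast
qed

lemma X_strip:
  "(x, u) \<in> X\<^sup>* \<Longrightarrow> reach x \<Longrightarrow> (x, t) \<in> X \<Longrightarrow> \<exists>v. (t, v) \<in> X\<^sup>* \<and> (u, v) \<in> X"
proof (induction rule: rtrancl_induct)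
  case base
  then show ?case by blast
next
  case (step u u')
  then obtain v where tv: "(t, v) \<in> X\<^sup>*" and uv: "(u, v) \<in> X" by blast
  have "reach u" using reach_rtrancl[OF step(4) X_rtrancl_imp_r[OF step(1)]] .
  then obtain v' where "(v, v') \<in> X" "(u', v') \<in> X" using X_diamond uv step(2) by blast
  with tv show ?case by (meson rtrancl_into_rtrancl)
qed

lemma X_join:
  "(x, t) \<in> X\<^sup>* \<Longrightarrow> reach x \<Longrightarrow> (x, u) \<in> X\<^sup>* \<Longrightarrow> \<exists>v. (t, v) \<in> X\<^sup>* \<and> (u, v) \<in> X\<^sup>*"
proof (induction rule: rtrancl_induct)
  case base
  then show ?case by blast
next
  case (step t t')
  then obtain v where tv: "(t, v) \<in> X\<^sup>*" and uv: "(u, v) \<in> X\<^sup>*" by blast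
  have "reach t" using reach_rtrancl[OF step(4) X_rtrancl_imp_r[OF step(1)]] .
  then obtain v' where "(t', v') \<in> X\<^sup>*" "(v, v') \<in> X" using X_strip[OF tv] step(2) by blast
  with uv show ?case by (meson rtrancl_into_rtrancl)
qed

lemma peaks_joinable_source: "peaks_joinable s"
  unfolding peaks_joinable_def
proof (intro allI impI)
  fix t u assume "(s, t) \<in> r\<^sup>*" and "(s, u) \<in> r\<^sup>*"
  then have "(s, t) \<in> X\<^sup>*" "(s, u) \<in> X\<^sup>*" using rtrancl_mono[OF r_subset_X] by blast+
  then obtain v where "(t, v) \<in> X\<^sup>*" "(u, v) \<in> X\<^sup>*" using X_join reach_def by blast
  then show "(t, u) \<in> joinable r" unfolding joinable_iff using X_rtrancl_imp_r by blast
qed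

end

theorem CR_r: "CR r"
proof -
  have "peaks_joinable y" for y
    by (rule wf_induct[OF wf_converse_below]) (use peaks_joinable_source in blast)
  then show ?thesis unfolding CR_iff_join peaks_joinable_def by blast
qed

end

definition parallel_pos :: "pos \<Rightarrow> pos \<Rightarrow> bool" where
  "parallel_pos p q \<longleftrightarrow> (\<nexists>r. q = p @ r) \<and> (\<nexists>r. p = q @ r)"

lemma parallel_pos_Cons [simp]: "parallel_pos (i # q) (i # p) = parallel_pos q p"
  by (auto simp: parallel_pos_def)

lemma parallel_set_iff: "parallel_set P \<longleftrightarrow> (\<forall>p\<in>P. \<forall>q\<in>P. p \<noteq> q \<longrightarrow> parallel_pos p q)"
  unfolding parallel_set_def parallel_pos_def by blast

definition shift :: "nat \<Rightarrow> pos set \<Rightarrow> pos set" where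
  "shift i P = {p. i # p \<in> P}"

text \<open>A structurally recursive counterpart of \<open>par_replace\<close>, convenient for induction.\<close>
function par_replace_rec :: "('f,'v) trm \<Rightarrow> pos set \<Rightarrow> (pos \<Rightarrow> ('f,'v) trm) \<Rightarrow> ('f,'v) trm" where
  "par_replace_rec (Var x) P g = (if [] \<in> P then g [] else Var x)"
| "par_replace_rec (Fun f ts) P g = (if [] \<in> P then g [] else
     Fun f (map (\<lambda>i. par_replace_rec (ts ! i) (shift i P) (\<lambda>p. g (i # p))) [0..<length ts]))"
  by pat_completeness auto
termination
  by (relation "measure (\<lambda>(t, P, g). size t)")
     (auto, metis less_Suc_eq_le nth_mem size_list_estimation' order_refl)

lemma par_replace_rec_empty [simp]: "par_replace_rec t {} g = t"
  by (induction t arbitrary: g) (auto simp: shift_def intro: nth_equalityI)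

lemma par_replace_rec_root: "[] \<in> P \<Longrightarrow> par_replace_rec t P g = g []"
  by (cases t) auto

lemma par_replace_rec_cong: "(\<forall>p\<in>P. g p = g' p) \<Longrightarrow> par_replace_rec t P g = par_replace_rec t P g'"
proof (induction t arbitrary: P g g')
  case (Fun f ts)
  then show ?case by (auto simp: shift_def intro!: Fun.IH)
qed simp

lemma replace_at_par_replace_rec:
  "is_pos t p \<Longrightarrow> p \<notin> P \<Longrightarrow> \<forall>q\<in>P. parallel_pos q p \<Longrightarrow>
   replace_at (par_replace_rec t P g) p (g p) = par_replace_rec t (insert p P) g"
proof (induction t arbitrary: p P g)
  case (Var x)
  then have "p = []" by (cases p) auto
  with Var show ?case by (auto simp: parallel_pos_def)
next
  case (Fun f ts)
  show ?case
  proof (cases p)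
    case Nil
    with Fun show ?thesis by (auto simp: parallel_pos_def)
  next
    case (Cons i p')
    have "[] \<notin> P" using Fun(4) Cons by (auto simp: parallel_pos_def)
    moreover have i: "i < length ts" "is_pos (ts ! i) p'" using Fun(2) Cons by auto
    moreover have "replace_at (par_replace_rec (ts ! i) (shift i P) (\<lambda>q. g (i # q))) p' (g (i # p')) =
        par_replace_rec (ts ! i) (insert p' (shift i P)) (\<lambda>q. g (i # q))"
      using Fun i Cons by (intro Fun.IH) (auto simp: shift_def)
    moreover have "shift i (insert (i # p') P) = insert p' (shift i P)"
      and "\<And>j. j \<noteq> i \<Longrightarrow> shift j (insert (i # p') P) = shift j P"
      by (auto simp: shift_def)
    ultimately show ?thesis using Cons by (auto simp: nth_list_update intro!: nth_equalityI)
  qed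
qed

lemma par_replace_eq_rec:
  assumes "finite P" and "parallel_set P" and "\<forall>p\<in>P. is_pos t p"
  shows "par_replace t P g = par_replace_rec t P g"
proof -
  have "fold (\<lambda>p u. replace_at u p (g p)) ps t = par_replace_rec t (set ps) g"
    if "distinct ps" and "set ps \<subseteq> P" for ps
    using that
  proof (induction ps rule: rev_induct)
    case (snoc p ps)
    then show ?case using assms(2,3)
      by (auto simp: parallel_set_iff intro!: replace_at_par_replace_rec)
  qed simp
  then show ?thesis using assms(1) unfolding par_replace_def by simp
qed

lemma subst_par_replace_rec:
  "\<forall>p\<in>P. is_pos t p \<Longrightarrow> subst (par_replace_rec t P g) \<tau> = par_replace_rec (subst t \<tau>) P (\<lambda>p. subst (g p) \<tau>)"
proof (induction t arbitrary: P g)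
  case (Var x)
  then have "P = {} \<or> P = {[]}" by (auto elim: is_pos.elims)
  then show ?case by (auto simp: par_replace_rec_root)
next
  case (Fun f ts)
  then show ?case by (auto simp: shift_def intro!: nth_equalityI Fun.IH)
qed

lemma par_replace_rec_subst_rtrancl:
  "\<forall>q\<in>Q. is_pos l q \<Longrightarrow> (\<And>y. (\<sigma> y, \<sigma>' y) \<in> (rew R)\<^sup>*) \<Longrightarrow>
   (par_replace_rec (subst l \<sigma>) Q G, par_replace_rec (subst l \<sigma>') Q G) \<in> (rew R)\<^sup>*"
proof (induction l arbitrary: Q G)
  case (Var y)
  then have "Q = {} \<or> Q = {[]}" by (auto elim: is_pos.elims)
  with Var show ?case by (auto simp: par_replace_rec_root)
next
  case (Fun f ls)
  show ?case
  proof (cases "[] \<in> Q")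
    case False
    have "(par_replace_rec (subst (ls ! i) \<sigma>) (shift i Q) (\<lambda>p. G (i # p)),
        par_replace_rec (subst (ls ! i) \<sigma>') (shift i Q) (\<lambda>p. G (i # p))) \<in> (rew R)\<^sup>*"
      if "i < length ls" for i
      using Fun that by (intro Fun.IH) (auto simp: shift_def)
    with False show ?thesis by (auto intro!: rew_rtrancl_args simp: list_all2_conv_all_nth)
  qed (simp add: par_replace_rec_root)
qed

text \<open>
  A parallel step from \<open>l\<sigma>\<close> to \<open>u\<close> splits into the redexes contracted at function positions
  \<open>Q\<close> of \<open>l\<close> and parallel steps \<open>\<sigma> \<Rightarrow> \<sigma>'\<close> inside the substitution.
\<close>
definition lhs_par_decomp ::
  "('f,'v) rule set \<Rightarrow> ('f,'v) trm \<Rightarrow> ('v \<Rightarrow> ('f,'v) trm) \<Rightarrow> ('f,'v) trm \<Rightarrow>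
   pos set \<Rightarrow> (pos \<Rightarrow> ('f,'v) rule) \<Rightarrow> (pos \<Rightarrow> 'v \<Rightarrow> ('f,'v) trm) \<Rightarrow> ('v \<Rightarrow> ('f,'v) trm) \<Rightarrow> bool"
where
  "lhs_par_decomp R l \<sigma> u Q rl \<rho> \<sigma>' \<longleftrightarrow> finite Q \<and> parallel_set Q \<and> Q \<subseteq> fun_poss l \<and>
     (\<forall>q\<in>Q. rl q \<in> R \<and> subt_at (subst l \<sigma>) q = subst (fst (rl q)) (\<rho> q) \<and>
             subt_at (subst l \<sigma>') q = subst (fst (rl q)) (\<rho> q)) \<and>
     (\<forall>y. par R (\<sigma> y) (\<sigma>' y)) \<and>
     u = par_replace_rec (subst l \<sigma>') Q (\<lambda>q. subst (snd (rl q)) (\<rho> q))"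

lemma lhs_par_decomp_Fun:
  fixes ls us :: "('f,'v) trm list"
  assumes lin: "linear_trm (Fun f ls)" and len: "length us = length ls"
    and args: "\<And>i. i < length ls \<Longrightarrow> lhs_par_decomp R (ls ! i) \<sigma> (us ! i) (QF i) (rlF i) (\<rho>F i) (\<sigma>F i)"
  shows "\<exists>Q rl \<rho> \<sigma>'. lhs_par_decomp R (Fun f ls) \<sigma> (Fun f us) Q rl \<rho> \<sigma>'"
proof -
  let ?n = "length ls"
  define Q where "Q = (\<Union>i<?n. (\<lambda>q. i # q) ` QF i)"
  define rl where "rl p = rlF (hd p) (tl p)" for p
  define \<rho> where "\<rho> p = \<rho>F (hd p) (tl p)" for p
  define \<sigma>' where "\<sigma>' y = (if \<exists>i<?n. y \<in> vars_trm (ls ! i)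
    then \<sigma>F (SOME i. i < ?n \<and> y \<in> vars_trm (ls ! i)) y else \<sigma> y)" for y
  have \<sigma>'_arg: "\<sigma>' y = \<sigma>F i y" if "i < ?n" "y \<in> vars_trm (ls ! i)" for i y
  proof -
    have "(SOME i. i < ?n \<and> y \<in> vars_trm (ls ! i)) = i"
      using lin that by (intro some_equality) auto
    with that show ?thesis unfolding \<sigma>'_def by auto
  qed
  have subst_arg: "subst (ls ! i) \<sigma>' = subst (ls ! i) (\<sigma>F i)" if "i < ?n" for i
    using \<sigma>'_arg that by (intro subst_cong) auto
  have shift_Q: "shift i Q = QF i" if "i < ?n" for i
    using that unfolding Q_def shift_def by auto
  have Q_Cons: "p \<in> Q \<longleftrightarrow> (\<exists>i p'. p = i # p' \<and> i < ?n \<and> p' \<in> QF i)" for p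
    unfolding Q_def by auto
  have "lhs_par_decomp R (Fun f ls) \<sigma> (Fun f us) Q rl \<rho> \<sigma>'"
    unfolding lhs_par_decomp_def
  proof (intro conjI)
    show "finite Q" unfolding Q_def using args by (auto simp: lhs_par_decomp_def)
    show "parallel_set Q"
      unfolding parallel_set_def
    proof (intro ballI impI)
      fix p q assume "p \<in> Q" "q \<in> Q" "p \<noteq> q"
      then obtain i p' j q' where "p = i # p'" "i < ?n" "p' \<in> QF i" "q = j # q'" "q' \<in> QF j"
        unfolding Q_Cons by blast
      with args \<open>p \<noteq> q\<close> show "\<nexists>r. q = p @ r"
        by (cases "i = j") (auto simp: lhs_par_decomp_def parallel_set_def)
    qed
    show "Q \<subseteq> fun_poss (Fun f ls)"
      using args by (force simp: Q_Cons lhs_par_decomp_def intro!: Cons_fun_poss_Fun)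
    show "\<forall>q\<in>Q. rl q \<in> R \<and> subt_at (subst (Fun f ls) \<sigma>) q = subst (fst (rl q)) (\<rho> q) \<and>
        subt_at (subst (Fun f ls) \<sigma>') q = subst (fst (rl q)) (\<rho> q)"
    proof
      fix p assume "p \<in> Q"
      then obtain i p' where "p = i # p'" "i < ?n" "p' \<in> QF i" unfolding Q_Cons by blast
      then show "rl p \<in> R \<and> subt_at (subst (Fun f ls) \<sigma>) p = subst (fst (rl p)) (\<rho> p) \<and>
          subt_at (subst (Fun f ls) \<sigma>') p = subst (fst (rl p)) (\<rho> p)"
        using args[of i] subst_arg[of i] unfolding rl_def \<rho>_def by (auto simp: lhs_par_decomp_def)
    qed
    show "\<forall>y. par R (\<sigma> y) (\<sigma>' y)"
    proof
      fix y
      show "par R (\<sigma> y) (\<sigma>' y)"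
      proof (cases "\<exists>i<?n. y \<in> vars_trm (ls ! i)")
        case True
        then obtain i where "i < ?n" "y \<in> vars_trm (ls ! i)" by blast
        then show ?thesis using args \<sigma>'_arg by (auto simp: lhs_par_decomp_def)
      qed (auto simp: \<sigma>'_def)
    qed
    have "us ! i = par_replace_rec (subst (ls ! i) \<sigma>') (shift i Q) (\<lambda>p. subst (snd (rl (i # p))) (\<rho> (i # p)))"
      if "i < ?n" for i
      using args[OF that] subst_arg[OF that] shift_Q[OF that] by (simp add: lhs_par_decomp_def rl_def \<rho>_def)
    moreover have "[] \<notin> Q" unfolding Q_def by auto
    ultimately show "Fun f us = par_replace_rec (subst (Fun f ls) \<sigma>') Q (\<lambda>q. subst (snd (rl q)) (\<rho> q))"
      using len by (auto intro!: nth_equalityI)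
  qed
  then show ?thesis by blast
qed

lemma linear_par_lhs_decomp:
  "linear_trm l \<Longrightarrow> par R (subst l \<sigma>) u \<Longrightarrow> \<exists>Q rl \<rho> \<sigma>'. lhs_par_decomp R l \<sigma> u Q rl \<rho> \<sigma>'"
proof (induction l arbitrary: u)
  case (Var y)
  then have "lhs_par_decomp R (Var y) \<sigma> u {} rl \<rho> (\<sigma>(y := u))" for rl \<rho>
    by (auto simp: lhs_par_decomp_def parallel_set_def)
  then show ?case by blast
next
  case (Fun f ls)
  from Fun.prems(2) show ?case
  proof (cases rule: par.cases)
    case (par_Fun ss us)
    then have u: "u = Fun f us" and args: "list_all2 (par R) (map (\<lambda>t. subst t \<sigma>) ls) us" by auto
    then have len: "length us = length ls" by (simp flip: list_all2_lengthD)
    have "\<forall>i<length ls. \<exists>Q rl \<rho> \<sigma>'. lhs_par_decomp R (ls ! i) \<sigma> (us ! i) Q rl \<rho> \<sigma>'"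
      using Fun.prems(1) args by (auto intro!: Fun.IH simp: list_all2_conv_all_nth)
    then obtain QF rlF \<rho>F \<sigma>F where
      "\<And>i. i < length ls \<Longrightarrow> lhs_par_decomp R (ls ! i) \<sigma> (us ! i) (QF i) (rlF i) (\<rho>F i) (\<sigma>F i)"
      by metis
    from lhs_par_decomp_Fun[OF Fun.prems(1) len this] show ?thesis unfolding u .
  next
    case (par_root l' r' \<sigma>')
    then have "lhs_par_decomp R (Fun f ls) \<sigma> u {[]} (\<lambda>_. (l', r')) (\<lambda>_. \<sigma>') \<sigma>"
      by (auto simp: lhs_par_decomp_def parallel_set_def root_fun_poss_Fun par_replace_rec_root)
    then show ?thesis by blast
  qed simp
qed

definition imgu :: "('f,'v) trm \<Rightarrow> ('f,'v) trm \<Rightarrow> ('v \<Rightarrow> ('f,'v) trm) \<Rightarrow> bool" where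
  "imgu s t \<mu> \<longleftrightarrow> subst s \<mu> = subst t \<mu> \<and>
    (\<forall>\<tau> :: 'v \<Rightarrow> ('f,'v) trm. subst s \<tau> = subst t \<tau> \<longrightarrow> (\<forall>z. \<tau> z = subst (\<mu> z) \<tau>))"

lemma imgu_sym: "imgu s t \<mu> \<longleftrightarrow> imgu t s \<mu>"
  unfolding imgu_def by metis

lemma imgu_Var:
  assumes "x \<notin> vars_trm t"
  shows "imgu (Var x) t (Var(x := t))"
proof -
  have "subst t (Var(x := t)) = subst t Var" by (rule subst_cong) (use assms in auto)
  then show ?thesis unfolding imgu_def by auto
qed

lemma imgu_Fun:
  fixes ss ts :: "('f,'v) trm list" and M :: "nat \<Rightarrow> 'v \<Rightarrow> ('f,'v) trm"
  assumes len: "length ts = length ss"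
    and disj: "\<And>i j. i < length ss \<Longrightarrow> j < length ss \<Longrightarrow> i \<noteq> j \<Longrightarrow>
      (vars_trm (ss ! i) \<union> vars_trm (ts ! i)) \<inter> (vars_trm (ss ! j) \<union> vars_trm (ts ! j)) = {}"
    and args: "\<And>i. i < length ss \<Longrightarrow> imgu (ss ! i) (ts ! i) (M i)"
  shows "\<exists>\<mu>. imgu (Fun f ss) (Fun f ts) \<mu>"
proof -
  let ?n = "length ss"
  define B where "B i = vars_trm (ss ! i) \<union> vars_trm (ts ! i)" for i
  define \<mu> where "\<mu> z = (if \<exists>i<?n. z \<in> B i then M (SOME i. i < ?n \<and> z \<in> B i) z else Var z)" for z
  have \<mu>_arg: "\<mu> z = M i z" if "i < ?n" "z \<in> B i" for i z
  proof -
    have "(SOME i. i < ?n \<and> z \<in> B i) = i"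
      using that disj unfolding B_def by (intro some_equality) blast+
    with that show ?thesis unfolding \<mu>_def by auto
  qed
  have "subst (ss ! i) \<mu> = subst (ss ! i) (M i)" "subst (ts ! i) \<mu> = subst (ts ! i) (M i)"
    if "i < ?n" for i
    using \<mu>_arg that unfolding B_def by (auto intro!: subst_cong)
  then have unifies: "subst (Fun f ss) \<mu> = subst (Fun f ts) \<mu>"
    using len args by (auto simp: imgu_def intro!: nth_equalityI)
  have "\<tau> z = subst (\<mu> z) \<tau>"
    if "subst (Fun f ss) \<tau> = subst (Fun f ts) \<tau>" for \<tau> :: "'v \<Rightarrow> ('f,'v) trm" and z
  proof (cases "\<exists>i<?n. z \<in> B i")
    case True
    then obtain i where i: "i < ?n" "z \<in> B i" by blast
    have "subst (ss ! i) \<tau> = subst (ts ! i) \<tau>"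
      using that i(1) len by (simp add: list_eq_iff_nth_eq)
    then show ?thesis using args[OF i(1)] \<mu>_arg[OF i] by (simp add: imgu_def)
  qed (auto simp: \<mu>_def)
  with unifies show ?thesis unfolding imgu_def by blast
qed

lemma linear_unifier_imp_imgu:
  "linear_trm s \<Longrightarrow> linear_trm t \<Longrightarrow> vars_trm s \<inter> vars_trm t = {} \<Longrightarrow> subst s \<theta> = subst t \<theta> \<Longrightarrow>
   \<exists>\<mu>. imgu s t \<mu>"
proof (induction s arbitrary: t)
  case (Var x)
  then show ?case using imgu_Var[of x t] by auto
next
  case (Fun f ss)
  show ?case
  proof (cases t)
    case (Var y)
    then show ?thesis using Fun.prems(3) imgu_Var[of y "Fun f ss"] imgu_sym[of "Fun f ss" "Var y"] by auto
  next
    case (Fun g ts)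
    with Fun.prems(4) have fg: "g = f" and args: "map (\<lambda>t. subst t \<theta>) ts = map (\<lambda>t. subst t \<theta>) ss" by auto
    then have len: "length ts = length ss" using map_eq_imp_length_eq by blast
    have "\<exists>\<mu>. imgu (ss ! i) (ts ! i) \<mu>" if i: "i < length ss" for i
    proof (rule Fun.IH)
      show "ss ! i \<in> set ss" "linear_trm (ss ! i)" using i Fun.prems(1) by auto
      show "linear_trm (ts ! i)" using i len Fun.prems(2) \<open>t = Fun g ts\<close> by auto
      show "vars_trm (ss ! i) \<inter> vars_trm (ts ! i) = {}"
        using i len Fun.prems(3) \<open>t = Fun g ts\<close> by (force dest: nth_mem)
      show "subst (ss ! i) \<theta> = subst (ts ! i) \<theta>" using i len args by (simp add: list_eq_iff_nth_eq)
    qed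
    then obtain M where "\<And>i. i < length ss \<Longrightarrow> imgu (ss ! i) (ts ! i) (M i)" by metis
    moreover have "(vars_trm (ss ! i) \<union> vars_trm (ts ! i)) \<inter> (vars_trm (ss ! j) \<union> vars_trm (ts ! j)) = {}"
      if "i < length ss" "j < length ss" "i \<noteq> j" for i j
    proof -
      have "vars_trm (ss ! i) \<inter> vars_trm (ss ! j) = {}" "vars_trm (ts ! i) \<inter> vars_trm (ts ! j) = {}"
        using Fun.prems(1,2) \<open>t = Fun g ts\<close> len that by auto
      moreover have "vars_trm (ss ! k) \<subseteq> vars_trm (Fun f ss)" "vars_trm (ts ! k) \<subseteq> vars_trm t"
        if "k < length ss" for k
      proof -
        have "ss ! k \<in> set ss" "ts ! k \<in> set ts" using that len by auto
        then show "vars_trm (ss ! k) \<subseteq> vars_trm (Fun f ss)" "vars_trm (ts ! k) \<subseteq> vars_trm t"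
          using \<open>t = Fun g ts\<close> by auto
      qed
      ultimately show ?thesis using Fun.prems(3) that by blast
    qed
    ultimately show ?thesis using imgu_Fun[OF len] fg \<open>t = Fun g ts\<close> by blast
  qed
qed

lemma linear_trm_rename: "inj \<pi> \<Longrightarrow> linear_trm t \<Longrightarrow> linear_trm (subst t (Var \<circ> \<pi>))"
proof (induction t)
  case (Fun f ts)
  have "vars_trm (subst (ts ! k) (Var \<circ> \<pi>)) = \<pi> ` vars_trm (ts ! k)" for k
    by (rule vars_trm_rename)
  with Fun show ?case by (auto simp: comp_def image_Int[symmetric] simp del: image_Int)
qed simp

lemma linear_subt_at: "is_pos l p \<Longrightarrow> linear_trm l \<Longrightarrow> linear_trm (subt_at l p)"
  by (induction l p rule: is_pos.induct) auto

lemma linear_vars_subt_at_disjoint: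
  "linear_trm l \<Longrightarrow> is_pos l p \<Longrightarrow> is_pos l q \<Longrightarrow> parallel_pos p q \<Longrightarrow>
   vars_trm (subt_at l p) \<inter> vars_trm (subt_at l q) = {}"
proof (induction l arbitrary: p q)
  case (Var x)
  then show ?case by (auto simp: parallel_pos_def elim: is_pos.elims)
next
  case (Fun f ts)
  obtain i p' j q' where p: "p = i # p'" and q: "q = j # q'"
    using Fun.prems(4) by (cases p; cases q) (auto simp: parallel_pos_def)
  have i: "i < length ts" "is_pos (ts ! i) p'" and j: "j < length ts" "is_pos (ts ! j) q'"
    using Fun.prems p q by auto
  show ?case
  proof (cases "i = j")
    case True
    then show ?thesis using Fun.IH[of "ts ! i" p' q'] Fun.prems i j p q by auto
  next
    case False
    then have "vars_trm (ts ! i) \<inter> vars_trm (ts ! j) = {}" using Fun.prems(1) i j by auto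
    then show ?thesis using vars_subt_at[OF i(2)] vars_subt_at[OF j(2)] p q by auto
  qed
qed

lemma ex_bij_fresh:
  assumes "infinite (UNIV :: 'v set)" and "finite (V :: 'v set)" and "finite (F :: 'v set)"
  shows "\<exists>\<pi>. bij \<pi> \<and> \<pi> ` V \<inter> F = {}"
proof -
  have "infinite (UNIV - (V \<union> F))" using assms by auto
  then obtain W where "finite W" and "card W = card V" and W: "W \<subseteq> UNIV - (V \<union> F)"
    using infinite_arbitrarily_large by blast
  then obtain h where "bij_betw h V W" using finite_same_card_bij assms(2) by metis
  then have hV: "h ` V = W" and inj: "inj_on h V" by (auto simp: bij_betw_def)
  define \<pi> where "\<pi> x = (if x \<in> V then h x else if x \<in> W then inv_into V h x else x)" for x
  have "\<pi> (\<pi> x) = x" for x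
  proof (cases "x \<in> V")
    case True
    then have "h x \<in> W" "h x \<notin> V" using hV W by blast+
    with True show ?thesis unfolding \<pi>_def using inv_into_f_f[OF inj True] by simp
  next
    case False
    show ?thesis
    proof (cases "x \<in> W")
      case True
      then have "x \<in> h ` V" using hV by simp
      then have "inv_into V h x \<in> V" "h (inv_into V h x) = x" by (auto intro: inv_into_into f_inv_into_f)
      with True False show ?thesis unfolding \<pi>_def by simp
    qed (use False in \<open>simp add: \<pi>_def\<close>)
  qed
  then have "bij \<pi>" by (rule involuntory_imp_bij)
  moreover have "\<pi> ` V \<inter> F = {}" using W hV unfolding \<pi>_def by auto
  ultimately show ?thesis by blast
qed

lemma ex_bijs_fresh:
  assumes inf: "infinite (UNIV :: 'v set)" and fin: "\<And>q. finite (V q :: 'v set)"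
  shows "finite Q \<Longrightarrow> finite (F :: 'v set) \<Longrightarrow> \<exists>\<pi>. (\<forall>q\<in>Q. bij (\<pi> q) \<and> \<pi> q ` V q \<inter> F = {}) \<and>
     (\<forall>q\<in>Q. \<forall>q'\<in>Q. q \<noteq> q' \<longrightarrow> \<pi> q ` V q \<inter> \<pi> q' ` V q' = {})"
proof (induction Q arbitrary: F rule: finite_induct)
  case (insert q Q)
  obtain \<pi>0 where \<pi>0: "bij \<pi>0" "\<pi>0 ` V q \<inter> F = {}" using ex_bij_fresh[OF inf fin insert.prems] by blast
  have "finite (F \<union> \<pi>0 ` V q)" using insert.prems fin by simp
  from insert.IH[OF this] obtain \<pi> where
    IH1: "\<forall>a\<in>Q. bij (\<pi> a) \<and> \<pi> a ` V a \<inter> (F \<union> \<pi>0 ` V q) = {}"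
    and IH2: "\<forall>a\<in>Q. \<forall>b\<in>Q. a \<noteq> b \<longrightarrow> \<pi> a ` V a \<inter> \<pi> b ` V b = {}"
    by blast
  let ?\<pi> = "\<pi>(q := \<pi>0)"
  have "\<forall>a\<in>insert q Q. bij (?\<pi> a) \<and> ?\<pi> a ` V a \<inter> F = {}"
    using \<pi>0 IH1 insert.hyps(2) by auto blast
  moreover have "?\<pi> a ` V a \<inter> ?\<pi> b ` V b = {}"
    if ab: "a \<in> insert q Q" "b \<in> insert q Q" "a \<noteq> b" for a b
  proof -
    consider "a = q" "b \<in> Q" | "b = q" "a \<in> Q" | "a \<in> Q" "b \<in> Q" using ab by auto
    then show ?thesis using IH1 IH2 insert.hyps(2) \<open>a \<noteq> b\<close> by cases auto
  qed
  ultimately show ?case by blast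
qed simp

section \<open>Parallel overlaps are instances of parallel critical peaks\<close>

lemma linear_Fun_map:
  assumes "distinct xs" and "\<And>x. x \<in> set xs \<Longrightarrow> linear_trm (g x)"
    and "\<And>x y. x \<in> set xs \<Longrightarrow> y \<in> set xs \<Longrightarrow> x \<noteq> y \<Longrightarrow> vars_trm (g x) \<inter> vars_trm (g y) = {}"
  shows "linear_trm (Fun f (map g xs))"
proof -
  have "vars_trm (g (xs ! i)) \<inter> vars_trm (g (xs ! j)) = {}"
    if "i < length xs" "j < length xs" "i \<noteq> j" for i j
    using that assms(3) nth_eq_iff_index_eq[OF assms(1)] by simp
  with assms(2) show ?thesis by simp
qed

locale parallel_overlap =
  fixes R :: "('f,'v) rule set" and l r :: "('f,'v) trm" and Q :: "pos set" and rl :: "pos \<Rightarrow> ('f,'v) rule"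
  assumes infinite_vars: "infinite (UNIV :: 'v set)"
    and trs_R: "trs R" and left_linear_R: "left_linear R" and rule_lr: "(l, r) \<in> R"
    and finite_Q: "finite Q" and Q_nonempty: "Q \<noteq> {}" and parallel_Q: "parallel_set Q"
    and Q_fun_poss: "Q \<subseteq> fun_poss l" and rules_rl: "\<And>q. q \<in> Q \<Longrightarrow> rl q \<in> R"
begin

definition overlaps :: "('v \<Rightarrow> ('f,'v) trm) \<Rightarrow> (pos \<Rightarrow> 'v \<Rightarrow> ('f,'v) trm) \<Rightarrow> bool" where
  "overlaps \<theta> \<rho> \<longleftrightarrow> (\<forall>q\<in>Q. subt_at (subst l \<theta>) q = subst (fst (rl q)) (\<rho> q))"

lemma is_pos_Q: "q \<in> Q \<Longrightarrow> is_pos l q"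
  using Q_fun_poss fun_poss_is_pos by blast

lemma linear_l: "linear_trm l"
  using left_linear_R rule_lr unfolding left_linear_def by auto

definition ren :: "pos \<Rightarrow> 'v \<Rightarrow> 'v" where
  "ren = (SOME \<pi>. (\<forall>q\<in>Q. bij (\<pi> q) \<and> \<pi> q ` vars_rule (rl q) \<inter> vars_rule (l, r) = {}) \<and>
     (\<forall>q\<in>Q. \<forall>q'\<in>Q. q \<noteq> q' \<longrightarrow> \<pi> q ` vars_rule (rl q) \<inter> \<pi> q' ` vars_rule (rl q') = {}))"

lemma ren: "(\<forall>q\<in>Q. bij (ren q) \<and> ren q ` vars_rule (rl q) \<inter> vars_rule (l, r) = {}) \<and>
     (\<forall>q\<in>Q. \<forall>q'\<in>Q. q \<noteq> q' \<longrightarrow> ren q ` vars_rule (rl q) \<inter> ren q' ` vars_rule (rl q') = {})"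
proof -
  have "finite (vars_rule \<rho>)" for \<rho> :: "('f,'v) rule" by (simp add: vars_rule_def)
  then have "\<exists>\<pi>. (\<forall>q\<in>Q. bij (\<pi> q) \<and> \<pi> q ` vars_rule (rl q) \<inter> vars_rule (l, r) = {}) \<and>
     (\<forall>q\<in>Q. \<forall>q'\<in>Q. q \<noteq> q' \<longrightarrow> \<pi> q ` vars_rule (rl q) \<inter> \<pi> q' ` vars_rule (rl q') = {})"
    using ex_bijs_fresh[OF infinite_vars, of "\<lambda>q. vars_rule (rl q)" Q "vars_rule (l, r)"] finite_Q
    by blast
  then show ?thesis unfolding ren_def by (rule someI_ex)
qed

lemma bij_ren: "q \<in> Q \<Longrightarrow> bij (ren q)"
  using ren by blast

lemma ren_fresh: "q \<in> Q \<Longrightarrow> ren q ` vars_rule (rl q) \<inter> vars_rule (l, r) = {}"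
  using ren by blast

lemma ren_disjoint: "q \<in> Q \<Longrightarrow> q' \<in> Q \<Longrightarrow> q \<noteq> q' \<Longrightarrow> ren q ` vars_rule (rl q) \<inter> ren q' ` vars_rule (rl q') = {}"
  using ren by blast

definition renamed :: "pos \<Rightarrow> ('f,'v) rule" where
  "renamed q = (subst (fst (rl q)) (Var \<circ> ren q), subst (snd (rl q)) (Var \<circ> ren q))"

lemma vars_rule_renamed: "vars_rule (renamed q) = ren q ` vars_rule (rl q)"
  unfolding renamed_def vars_rule_def by (simp add: vars_trm_rename image_Un)

lemma variant_of_renamed: "q \<in> Q \<Longrightarrow> variant_of (renamed q) R"
  unfolding variant_of_def variant_def renamed_def
  by (intro bexI[of _ "rl q"] exI[of _ "ren q"]) (use bij_ren rules_rl in auto)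

text \<open>The substitution that acts as \<open>\<theta>\<close> on the variables of \<open>l \<rightarrow> r\<close> and as \<open>\<rho> q\<close> on the
  renamed variables of \<open>rl q\<close>; it is well defined since the renamed rules are variable-disjoint.\<close>
definition merged :: "('v \<Rightarrow> ('f,'v) trm) \<Rightarrow> (pos \<Rightarrow> 'v \<Rightarrow> ('f,'v) trm) \<Rightarrow> 'v \<Rightarrow> ('f,'v) trm" where
  "merged \<theta> \<rho> z = (if z \<in> vars_rule (l, r) then \<theta> z
     else if \<exists>q\<in>Q. z \<in> ren q ` vars_rule (rl q)
     then (let q = SOME q. q \<in> Q \<and> z \<in> ren q ` vars_rule (rl q) in \<rho> q (inv (ren q) z))
     else Var z)"

lemma subst_merged_lr: "vars_trm t \<subseteq> vars_rule (l, r) \<Longrightarrow> subst t (merged \<theta> \<rho>) = subst t \<theta>"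
  unfolding merged_def by (intro subst_cong) auto

lemma merged_ren: 
  assumes "q \<in> Q" and "x \<in> vars_rule (rl q)"
  shows "merged \<theta> \<rho> (ren q x) = \<rho> q x"
proof -
  have "(SOME q'. q' \<in> Q \<and> ren q x \<in> ren q' ` vars_rule (rl q')) = q"
    using ren_disjoint assms by (intro some_equality) blast+
  moreover have "inv (ren q) (ren q x) = x" using bij_ren[OF assms(1)] by (simp add: bij_is_inj)
  moreover have "ren q x \<notin> vars_rule (l, r)" using ren_fresh assms by blast
  ultimately show ?thesis unfolding merged_def using assms by (auto simp: Let_def)
qed

lemma subst_renamed_merged:
  assumes "q \<in> Q"
  shows "subst (fst (renamed q)) (merged \<theta> \<rho>) = subst (fst (rl q)) (\<rho> q)"
    and "subst (snd (renamed q)) (merged \<theta> \<rho>) = subst (snd (rl q)) (\<rho> q)"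
proof -
  have "subst (subst t (Var \<circ> ren q)) (merged \<theta> \<rho>) = subst t (\<rho> q)"
    if "vars_trm t \<subseteq> vars_rule (rl q)" for t
    unfolding subst_subst using that merged_ren[OF assms] by (intro subst_cong) auto
  then show "subst (fst (renamed q)) (merged \<theta> \<rho>) = subst (fst (rl q)) (\<rho> q)"
    and "subst (snd (renamed q)) (merged \<theta> \<rho>) = subst (snd (rl q)) (\<rho> q)"
    unfolding renamed_def vars_rule_def by auto
qed

definition equations :: "('f,'v) rule set" where
  "equations = {(fst (renamed q), subt_at l q) | q. q \<in> Q}"

lemma vars_subt_at_lr:
  assumes "q \<in> Q"
  shows "vars_trm (subt_at l q) \<subseteq> vars_rule (l, r)"
  using vars_subt_at[OF is_pos_Q[OF assms]] unfolding vars_rule_def by auto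

lemma overlaps_imp_unifier:
  assumes "overlaps \<theta> \<rho>"
  shows "unifier (merged \<theta> \<rho>) equations"
  unfolding unifier_def equations_def
proof (clarify)
  fix q assume q: "q \<in> Q"
  have "subst (fst (renamed q)) (merged \<theta> \<rho>) = subst (fst (rl q)) (\<rho> q)"
    using subst_renamed_merged(1)[OF q] .
  also have "\<dots> = subt_at (subst l \<theta>) q" using assms q unfolding overlaps_def by simp
  also have "\<dots> = subst (subt_at l q) \<theta>" using subt_at_subst[OF is_pos_Q[OF q]] .
  also have "\<dots> = subst (subt_at l q) (merged \<theta> \<rho>)"
    using subst_merged_lr[OF vars_subt_at_lr[OF q]] by simp
  finally show "subst (fst (renamed q)) (merged \<theta> \<rho>) = subst (subt_at l q) (merged \<theta> \<rho>)" .
qed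

text \<open>Left-linearity turns the equations into a single unification problem between two linear,
  variable-disjoint terms, which therefore has an idempotent most general unifier.\<close>
lemma overlaps_imp_imgu:
  assumes "overlaps \<sigma> \<rho>"
  shows "\<exists>\<mu>. unifier \<mu> equations \<and> (\<forall>\<tau>. unifier \<tau> equations \<longrightarrow> (\<forall>z. \<tau> z = subst (\<mu> z) \<tau>))"
proof -
  define qs where "qs = sorted_list_of_set Q"
  have qs: "set qs = Q" "distinct qs" unfolding qs_def using finite_Q by auto
  define S where "S = Fun undefined (map (\<lambda>q. fst (renamed q)) qs)"
  define T where "T = Fun undefined (map (\<lambda>q. subt_at l q) qs)"
  have ST: "subst S \<tau> = subst T \<tau> \<longleftrightarrow> unifier \<tau> equations" for \<tau>
    unfolding S_def T_def unifier_def equations_def using qs by auto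
  have "linear_trm (fst (renamed q))" if "q \<in> Q" for q
  proof -
    have "linear_trm (fst (rl q))" using left_linear_R rules_rl[OF that] unfolding left_linear_def by auto
    then show ?thesis using bij_ren[OF that] unfolding renamed_def by (simp add: linear_trm_rename bij_is_inj)
  qed
  moreover have "vars_trm (fst (renamed p)) \<inter> vars_trm (fst (renamed q)) = {}"
    if "p \<in> Q" "q \<in> Q" "p \<noteq> q" for p q
  proof -
    have "vars_rule (renamed p) \<inter> vars_rule (renamed q) = {}"
      using ren_disjoint that by (simp add: vars_rule_renamed)
    then show ?thesis unfolding vars_rule_def by blast
  qed
  ultimately have lin_S: "linear_trm S"
    unfolding S_def using qs by (intro linear_Fun_map) auto
  have "vars_trm (subt_at l p) \<inter> vars_trm (subt_at l q) = {}" if "p \<in> Q" "q \<in> Q" "p \<noteq> q" for p q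
    using linear_vars_subt_at_disjoint[OF linear_l is_pos_Q is_pos_Q] parallel_Q that
    by (simp add: parallel_set_iff)
  then have lin_T: "linear_trm T"
    unfolding T_def using qs linear_subt_at[OF is_pos_Q linear_l] by (intro linear_Fun_map) auto
  have "vars_trm S \<subseteq> (\<Union>q\<in>Q. ren q ` vars_rule (rl q))"
    unfolding S_def using qs vars_rule_renamed unfolding vars_rule_def by auto
  moreover have "vars_trm T \<subseteq> vars_rule (l, r)" unfolding T_def using qs vars_subt_at_lr by auto
  ultimately have "vars_trm S \<inter> vars_trm T = {}" using ren_fresh by blast
  moreover have "subst S (merged \<sigma> \<rho>) = subst T (merged \<sigma> \<rho>)"
    using ST overlaps_imp_unifier[OF assms] by blast
  ultimately obtain \<mu> where "imgu S T \<mu>" using linear_unifier_imp_imgu[OF lin_S lin_T] by blast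
  then show ?thesis unfolding imgu_def ST by blast
qed

definition inner_contractum :: "('v \<Rightarrow> ('f,'v) trm) \<Rightarrow> (pos \<Rightarrow> 'v \<Rightarrow> ('f,'v) trm) \<Rightarrow> ('f,'v) trm" where
  "inner_contractum \<theta> \<rho> = par_replace_rec (subst l \<theta>) Q (\<lambda>q. subst (snd (rl q)) (\<rho> q))"

lemma root_variant_overlap:
  assumes "Q = {[]}" and "variant (renamed []) (l, r)" and "overlaps \<theta> \<rho>"
  shows "inner_contractum \<theta> \<rho> = subst r \<theta>"
proof -
  obtain \<pi> where renamed: "renamed [] = (subst l (Var \<circ> \<pi>), subst r (Var \<circ> \<pi>))"
    using assms(2) unfolding variant_def by auto
  let ?\<tau> = "merged \<theta> \<rho>"
  have "subst (fst (renamed [])) ?\<tau> = subst l ?\<tau>"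
    using overlaps_imp_unifier[OF assms(3)] assms(1) unfolding unifier_def equations_def by auto
  then have "subst l (\<lambda>x. ?\<tau> (\<pi> x)) = subst l ?\<tau>" using renamed by (simp add: subst_subst)
  then have "?\<tau> (\<pi> x) = ?\<tau> x" if "x \<in> vars_trm r" for x
    using that trs_R rule_lr subst_eq_imp_eq_on_vars unfolding trs_def by fastforce
  then have "subst r (\<lambda>x. ?\<tau> (\<pi> x)) = subst r ?\<tau>" by (rule subst_cong)
  then have "subst (snd (renamed [])) ?\<tau> = subst r \<theta>"
    using renamed subst_merged_lr[of r] by (simp add: subst_subst vars_rule_def)
  moreover have root: "[] \<in> Q" using assms(1) by simp
  ultimately show ?thesis
    unfolding inner_contractum_def par_replace_rec_root[OF root] using subst_renamed_merged(2)[OF root] by simp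
qed

lemma overlap_instance_of_pcpeak:
  assumes nontrivial: "\<not> (Q = {[]} \<and> variant (renamed []) (l, r))" and "overlaps \<sigma> \<rho>"
  shows "\<exists>t0 s0 u0. (t0, s0, u0) \<in> pcpeaks R \<and> (\<forall>\<theta> \<rho>'. overlaps \<theta> \<rho>' \<longrightarrow>
    (\<exists>\<tau>. subst s0 \<tau> = subst l \<theta> \<and> subst t0 \<tau> = inner_contractum \<theta> \<rho>' \<and> subst u0 \<tau> = subst r \<theta>))"
proof -
  obtain \<mu> where unif: "unifier \<mu> equations"
    and mg: "\<And>\<tau>. unifier \<tau> equations \<Longrightarrow> \<forall>z. \<tau> z = subst (\<mu> z) \<tau>"
    using overlaps_imp_imgu[OF assms(2)] by blast
  define t0 where "t0 = par_replace (subst l \<mu>) Q (\<lambda>p. subst (snd (renamed p)) \<mu>)"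
  have "mgu \<mu> equations" unfolding mgu_def using unif mg by blast
  moreover have "variant_of (l, r) R"
    unfolding variant_of_def variant_def using rule_lr by (intro bexI[of _ "(l, r)"] exI[of _ id]) auto
  moreover have "\<forall>p\<in>Q. vars_rule (l, r) \<inter> vars_rule (renamed p) = {}"
    using ren_fresh by (auto simp: vars_rule_renamed)
  moreover have "\<forall>p\<in>Q. \<forall>q\<in>Q. p \<noteq> q \<longrightarrow> vars_rule (renamed p) \<inter> vars_rule (renamed q) = {}"
    using ren_disjoint by (simp add: vars_rule_renamed)
  ultimately have pcpeak: "(t0, subst l \<mu>, subst r \<mu>) \<in> pcpeaks R"
    unfolding pcpeaks_def mem_Collect_eq prod.case
    by (intro exI[of _ l] exI[of _ r] exI[of _ renamed] exI[of _ Q] exI[of _ \<mu>] conjI)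
      (use Q_nonempty Q_fun_poss parallel_Q nontrivial in \<open>simp_all add: t0_def equations_def variant_of_renamed\<close>)
  have "\<exists>\<tau>. subst (subst l \<mu>) \<tau> = subst l \<theta> \<and> subst t0 \<tau> = inner_contractum \<theta> \<rho>' \<and>
      subst (subst r \<mu>) \<tau> = subst r \<theta>" if "overlaps \<theta> \<rho>'" for \<theta> \<rho>'
  proof (intro exI conjI)
    let ?\<tau> = "merged \<theta> \<rho>'"
    have "(\<lambda>x. subst (\<mu> x) ?\<tau>) = ?\<tau>"
      using mg[OF overlaps_imp_unifier[OF that]] by (simp add: fun_eq_iff)
    then have \<mu>\<tau>: "subst (subst w \<mu>) ?\<tau> = subst w ?\<tau>" for w by (simp add: subst_subst)
    show "subst (subst l \<mu>) ?\<tau> = subst l \<theta>" "subst (subst r \<mu>) ?\<tau> = subst r \<theta>"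
      unfolding \<mu>\<tau> by (simp_all add: subst_merged_lr vars_rule_def)
    have pos: "\<forall>p\<in>Q. is_pos (subst l \<mu>) p" using is_pos_Q is_pos_subst by blast
    have "subst t0 ?\<tau> = par_replace_rec (subst l \<theta>) Q (\<lambda>p. subst (snd (renamed p)) ?\<tau>)"
      unfolding t0_def par_replace_eq_rec[OF finite_Q parallel_Q pos] subst_par_replace_rec[OF pos] \<mu>\<tau>
      by (simp add: subst_merged_lr vars_rule_def)
    also have "\<dots> = inner_contractum \<theta> \<rho>'"
      unfolding inner_contractum_def using subst_renamed_merged(2) by (intro par_replace_rec_cong) auto
    finally show "subst t0 ?\<tau> = inner_contractum \<theta> \<rho>'" .
  qed
  with pcpeak show ?thesis by blast
qed

lemma overlap_cases:
  assumes "overlaps \<sigma> \<rho>"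
  shows "(\<forall>\<theta> \<rho>'. overlaps \<theta> \<rho>' \<longrightarrow> inner_contractum \<theta> \<rho>' = subst r \<theta>) \<or>
    (\<exists>t0 s0 u0. (t0, s0, u0) \<in> pcpeaks R \<and> (\<forall>\<theta> \<rho>'. overlaps \<theta> \<rho>' \<longrightarrow>
      (\<exists>\<tau>. subst s0 \<tau> = subst l \<theta> \<and> subst t0 \<tau> = inner_contractum \<theta> \<rho>' \<and> subst u0 \<tau> = subst r \<theta>)))"
  using root_variant_overlap overlap_instance_of_pcpeak[OF _ assms] by blast

end

section \<open>Peaks of parallel steps\<close>

definition par_rew :: "('f,'v) rule set \<Rightarrow> ('f,'v) rule set \<Rightarrow> ('f,'v) trm rel" where
  "par_rew L C = {(a, b). par L a b} O (rew C)\<^sup>*"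

lemma par_rew_refl [simp]: "(t, t) \<in> par_rew L C"
  unfolding par_rew_def by (rule relcompI[of _ t]) auto

lemma par_rew_Fun:
  assumes "list_all2 (\<lambda>a b. (a, b) \<in> par_rew L C) as bs"
  shows "(Fun f as, Fun f bs) \<in> par_rew L C"
proof -
  have "\<forall>i<length as. \<exists>m. par L (as ! i) m \<and> (m, bs ! i) \<in> (rew C)\<^sup>*"
    using assms unfolding par_rew_def by (auto simp: list_all2_conv_all_nth)
  then obtain M where M: "\<And>i. i < length as \<Longrightarrow> par L (as ! i) (M i) \<and> (M i, bs ! i) \<in> (rew C)\<^sup>*"
    by metis
  define ms where "ms = map M [0..<length as]"
  have "par L (Fun f as) (Fun f ms)"
    using M by (auto intro!: par_Fun simp: ms_def list_all2_conv_all_nth)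
  moreover have "(Fun f ms, Fun f bs) \<in> (rew C)\<^sup>*"
    using M assms by (auto intro!: rew_rtrancl_args simp: ms_def list_all2_conv_all_nth)
  ultimately show ?thesis unfolding par_rew_def by blast
qed

lemma par_rew_join_Fun:
  assumes "length ts = length us"
    and "\<And>i. i < length ts \<Longrightarrow> \<exists>v. (ts ! i, v) \<in> par_rew R C \<and> (us ! i, v) \<in> par_rew L C"
  shows "\<exists>v. (Fun f ts, v) \<in> par_rew R C \<and> (Fun f us, v) \<in> par_rew L C"
proof -
  obtain V where V: "\<And>i. i < length ts \<Longrightarrow> (ts ! i, V i) \<in> par_rew R C \<and> (us ! i, V i) \<in> par_rew L C"
    using assms(2) by metis
  define vs where "vs = map V [0..<length ts]"
  have "(Fun f ts, Fun f vs) \<in> par_rew R C" "(Fun f us, Fun f vs) \<in> par_rew L C"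
    using V assms(1) by (auto intro!: par_rew_Fun simp: vs_def list_all2_conv_all_nth)
  then show ?thesis by blast
qed

lemma decreasing_peak_Fun:
  assumes "i < length xs" and "decreasing_peak (rew R) (rew P) (xs ! i) (ts ! i) (us ! i)"
    and "list_all2 (\<lambda>a b. (a, b) \<in> (rew R)\<^sup>*) xs ts" and "list_all2 (\<lambda>a b. (a, b) \<in> (rew R)\<^sup>*) xs us"
  shows "decreasing_peak (rew R) (rew P) (Fun f xs) (Fun f ts) (Fun f us)"
proof -
  obtain x1 x2 where p1: "(xs ! i, x1) \<in> rew P" and p2: "(xs ! i, x2) \<in> rew P"
    and x1t: "(x1, ts ! i) \<in> (rew R)\<^sup>*" and x2u: "(x2, us ! i) \<in> (rew R)\<^sup>*"
    and j: "(x1, x2) \<in> joinable (rew R)"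
    using assms(2) unfolding decreasing_peak_def by blast
  have "(Fun f xs, Fun f (xs[i := x1])) \<in> rew P" "(Fun f xs, Fun f (xs[i := x2])) \<in> rew P"
    using rew_ctxt[OF p1 assms(1), of f] rew_ctxt[OF p2 assms(1), of f] by simp_all
  moreover have "(Fun f (xs[i := x1]), Fun f ts) \<in> (rew R)\<^sup>*" "(Fun f (xs[i := x2]), Fun f us) \<in> (rew R)\<^sup>*"
    using assms(1,3,4) x1t x2u
    by (auto intro!: rew_rtrancl_args simp: list_all2_conv_all_nth nth_list_update)
  moreover have "(Fun f (xs[i := x1]), Fun f (xs[i := x2])) \<in> joinable (rew R)"
    using joinable_rew_ctxt[OF j assms(1)] .
  ultimately show ?thesis unfolding decreasing_peak_def by blast
qed

context
  fixes R C :: "('f,'v) rule set"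
  assumes infinite_vars: "infinite (UNIV :: 'v set)" and trs_R: "trs R" and left_linear_R: "left_linear R"
    and C_subset_R: "C \<subseteq> R" and CR_C: "CR (rew C)"
    and pcpeaks_joinable: "\<forall>(t, s, u) \<in> pcpeaks R. (t, u) \<in> joinable (rew R)"
begin

text \<open>
  The dichotomy behind \<open>PCPS\<close>: a peak \<open>t \<leftarrow> s \<rightarrow> w\<close> instantiating a parallel critical peak
  is closed by confluence of \<open>C\<close> if the critical pair is \<open>C\<close>-convertible, and otherwise both
  of its steps are \<open>PCPS\<close>-steps.
\<close>
lemma pcpeak_instance_peak:
  assumes "(t0, s0, u0) \<in> pcpeaks R"
    and "subst s0 \<tau> = s" and "subst t0 \<tau> = t" and "subst u0 \<tau> = w"
    and "subst t0 \<tau>' = u" and "subst u0 \<tau>' = w'"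
    and "(t, u) \<in> (rew R)\<^sup>*" and "par L w w'"
  shows "decreasing_peak (rew R) (rew (PCPS R C)) s w u \<or>
    (\<exists>v. (w, v) \<in> par_rew L C \<and> (u, v) \<in> par_rew L' C)"
proof (cases "(t0, u0) \<in> conv (rew C)")
  case True
  then have "(u, w') \<in> joinable (rew C)"
    using conv_rew_subst[OF True, of \<tau>'] assms(5,6) CR_conv_imp_joinable[OF CR_C] by simp
  then obtain z where "(u, z) \<in> (rew C)\<^sup>*" "(w', z) \<in> (rew C)\<^sup>*" unfolding joinable_iff by blast
  then have "(w, z) \<in> par_rew L C" "(u, z) \<in> par_rew L' C"
    using assms(8) par_refl unfolding par_rew_def by blast+
  then show ?thesis by blast
next
  case False
  then have "(s0, t0) \<in> PCPS R C" "(s0, u0) \<in> PCPS R C"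
    using assms(1) unfolding PCPS_def rstep_eq_rew by blast+
  then have "(s, t) \<in> rew (PCPS R C)" "(s, w) \<in> rew (PCPS R C)"
    using rew_root[of s0 t0 "PCPS R C" \<tau>] rew_root[of s0 u0 "PCPS R C" \<tau>] assms(2-4) by simp_all
  moreover have "(w, t) \<in> joinable (rew R)"
    using joinable_rew_subst[of t0 u0 R \<tau>] pcpeaks_joinable assms(1,3,4) joinable_sym by fastforce
  ultimately show ?thesis using assms(7) unfolding decreasing_peak_def by blast
qed

lemma root_peak:
  assumes "R1 \<subseteq> R" and "R2 \<subseteq> R" and "(l, r) \<in> R1" and "par R2 (subst l \<sigma>) u"
  shows "decreasing_peak (rew R) (rew (PCPS R C)) (subst l \<sigma>) (subst r \<sigma>) u \<or>
    (\<exists>v. (subst r \<sigma>, v) \<in> par_rew R2 C \<and> (u, v) \<in> par_rew R1 C)"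
proof -
  have lr: "(l, r) \<in> R" using assms(1,3) by blast
  then have "linear_trm l" using left_linear_R unfolding left_linear_def by auto
  then obtain Q rl \<rho> \<sigma>' where decomp: "lhs_par_decomp R2 l \<sigma> u Q rl \<rho> \<sigma>'"
    using linear_par_lhs_decomp assms(4) by blast
  have par_\<sigma>: "par R2 (subst r \<sigma>) (subst r \<sigma>')"
    using decomp by (auto simp: lhs_par_decomp_def intro: par_subst)
  then have closed: "(subst r \<sigma>, subst r \<sigma>') \<in> par_rew R2 C" unfolding par_rew_def by blast
  show ?thesis
  proof (cases "Q = {}")
    case True
    then have "par R1 u (subst r \<sigma>')" using decomp par_root[OF assms(3)] by (simp add: lhs_par_decomp_def)
    then show ?thesis using closed unfolding par_rew_def by blast
  next
    case False
    interpret parallel_overlap R l r Q rl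
      using decomp False infinite_vars trs_R left_linear_R lr assms(2)
      by unfold_locales (auto simp: lhs_par_decomp_def)
    have ov: "overlaps \<sigma> \<rho>" "overlaps \<sigma>' \<rho>" and u: "u = inner_contractum \<sigma>' \<rho>"
      using decomp by (auto simp: lhs_par_decomp_def overlaps_def inner_contractum_def)
    have "(\<sigma> y, \<sigma>' y) \<in> (rew R)\<^sup>*" for y
    proof -
      have "(\<sigma> y, \<sigma>' y) \<in> (rew R2)\<^sup>*"
        using decomp par_imp_rew_rtrancl[of R2 "\<sigma> y" "\<sigma>' y"] unfolding lhs_par_decomp_def by blast
      then show ?thesis using rtrancl_mono[OF rew_mono[OF assms(2)]] by blast
    qed
    then have "(inner_contractum \<sigma> \<rho>, u) \<in> (rew R)\<^sup>*"
      unfolding u inner_contractum_def by (intro par_replace_rec_subst_rtrancl) (use is_pos_Q in auto)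
    from overlap_cases[OF ov(1)] show ?thesis
    proof
      assume "\<forall>\<theta> \<rho>'. overlaps \<theta> \<rho>' \<longrightarrow> inner_contractum \<theta> \<rho>' = subst r \<theta>"
      then have "u = subst r \<sigma>'" using ov(2) u by blast
      then show ?thesis using closed par_rew_refl[of u R1 C] by blast
    next
      assume "\<exists>t0 s0 u0. (t0, s0, u0) \<in> pcpeaks R \<and> (\<forall>\<theta> \<rho>'. overlaps \<theta> \<rho>' \<longrightarrow>
        (\<exists>\<tau>. subst s0 \<tau> = subst l \<theta> \<and> subst t0 \<tau> = inner_contractum \<theta> \<rho>' \<and> subst u0 \<tau> = subst r \<theta>))"
      then obtain t0 s0 u0 \<tau> \<tau>' where "(t0, s0, u0) \<in> pcpeaks R"
        and "subst s0 \<tau> = subst l \<sigma>" "subst t0 \<tau> = inner_contractum \<sigma> \<rho>" "subst u0 \<tau> = subst r \<sigma>"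
        and "subst t0 \<tau>' = u" "subst u0 \<tau>' = subst r \<sigma>'"
        using ov u by metis
      from pcpeak_instance_peak[OF this \<open>(inner_contractum \<sigma> \<rho>, u) \<in> (rew R)\<^sup>*\<close> par_\<sigma>]
      show ?thesis .
    qed
  qed
qed

lemma par_peak:
  "par L x t \<Longrightarrow> L \<subseteq> R \<Longrightarrow> par R x u \<Longrightarrow> decreasing_peak (rew R) (rew (PCPS R C)) x t u \<or>
    (\<exists>v. (t, v) \<in> par_rew R C \<and> (u, v) \<in> par_rew L C)"
proof (induction x arbitrary: t u)
  case (Var x)
  have "trs L" using trs_R \<open>L \<subseteq> R\<close> unfolding trs_def by blast
  then have "t = Var x" "u = Var x"
    using par_Var_imp_eq[OF Var.prems(1)] par_Var_imp_eq[OF Var.prems(3) trs_R] by simp_all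
  then show ?case using par_rew_refl by blast
next
  case (Fun f xs)
  from Fun.prems(1) show ?case
  proof (cases rule: par.cases)
    case (par_root l r \<sigma>)
    with root_peak[OF Fun.prems(2) order_refl par_root(3)] Fun.prems(3) show ?thesis by simp
  next
    case par_Fun
    then obtain ts where t: "t = Fun f ts" and xs_ts: "list_all2 (par L) xs ts" by auto
    from Fun.prems(3) show ?thesis
    proof (cases rule: par.cases)
      case (par_root l r \<sigma>)
      with root_peak[OF order_refl Fun.prems(2) par_root(3), of \<sigma> t] Fun.prems(1)
      show ?thesis by (auto dest: decreasing_peak_sym)
    next
      case par_Fun
      then obtain us where u: "u = Fun f us" and xs_us: "list_all2 (par R) xs us" by auto
      have "list_all2 (\<lambda>a b. (a, b) \<in> (rew R)\<^sup>*) xs ts"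
        using xs_ts rtrancl_mono[OF rew_mono[OF Fun.prems(2)]]
        by (auto simp: list_all2_conv_all_nth dest!: par_imp_rew_rtrancl)
      moreover have "list_all2 (\<lambda>a b. (a, b) \<in> (rew R)\<^sup>*) xs us"
        using xs_us by (auto simp: list_all2_conv_all_nth dest: par_imp_rew_rtrancl)
      moreover have "decreasing_peak (rew R) (rew (PCPS R C)) (xs ! i) (ts ! i) (us ! i) \<or>
          (\<exists>v. (ts ! i, v) \<in> par_rew R C \<and> (us ! i, v) \<in> par_rew L C)" if "i < length xs" for i
        using Fun.IH[OF nth_mem[OF that]] xs_ts xs_us that Fun.prems(2)
        by (auto simp: list_all2_conv_all_nth)
      ultimately show ?thesis
        unfolding t u using decreasing_peak_Fun par_rew_join_Fun xs_ts xs_us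
        by (metis list_all2_lengthD)
    qed
  qed
qed

lemma CR_rew:
  assumes "SN_rel (rew (PCPS R C)) (rew R)"
  shows "CR (rew R)"
proof -
  interpret relative_termination_criterion "rew R" "{(a, b). par R a b}" "rew C" "rew (PCPS R C)"
  proof
    show "rew R \<subseteq> {(a, b). par R a b}" using rew_imp_par by auto
    show "{(a, b). par R a b} \<subseteq> (rew R)\<^sup>*" using par_imp_rew_rtrancl by auto
    show "rew C \<subseteq> rew R" using rew_mono[OF C_subset_R] .
  next
    fix x t u
    assume "(x, t) \<in> rew C" and "(x, u) \<in> {(a, b). par R a b}"
    with par_peak[OF rew_imp_par C_subset_R] have "decreasing_peak (rew R) (rew (PCPS R C)) x t u \<or>
        (\<exists>v. (t, v) \<in> par_rew R C \<and> (u, v) \<in> par_rew C C)" by simp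
    moreover have "par_rew C C \<subseteq> (rew C)\<^sup>*"
      unfolding par_rew_def using par_imp_rew_rtrancl by (blast intro: rtrancl_trans)
    ultimately show "(\<exists>v. (t, v) \<in> {(a, b). par R a b} O (rew C)\<^sup>* \<and> (u, v) \<in> (rew C)\<^sup>*) \<or>
        decreasing_peak (rew R) (rew (PCPS R C)) x t u"
      unfolding par_rew_def by blast
  next
    fix x t u
    assume "(x, t) \<in> {(a, b). par R a b}" and "(x, u) \<in> {(a, b). par R a b}"
    with par_peak[of R x t u] show "(\<exists>v. (t, v) \<in> {(a, b). par R a b} O (rew C)\<^sup>* \<and>
        (u, v) \<in> {(a, b). par R a b} O (rew C)\<^sup>*) \<or> decreasing_peak (rew R) (rew (PCPS R C)) x t u"
      unfolding par_rew_def by blast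
  qed (use CR_C assms in auto)
  show ?thesis by (rule CR_r)
qed

end

theorem theorem11:
  fixes R C :: "('f,'v) rule set"
  assumes "infinite (UNIV :: 'v set)"
    and "trs R" and "left_linear R"
    and "C \<subseteq> R" and "CR (rstep C)"
    and "\<forall>(t, s, u) \<in> pcpeaks R. (t, u) \<in> joinable (rstep R)"
    and "SN_rel (rstep (PCPS R C)) (rstep R)"
  shows "CR (rstep R)"
  using CR_rew assms unfolding rstep_eq_rew by blast

end
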